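(* Let $M$ be an adequate monoid, $\chi:\Sigma\to M$ a function, $\rho$ the map defined below, and $\hat\rho:T^1(\Sigma)\to M$ the restriction of $\rho$ to (isomorphism types of) pruned trees. Then $\hat\rho$ is a $(2,1,1,0)$-morphism from $T^1(\Sigma)$, with pruned multiplication, $+$, $*$ and the trivial tree as identity, to $M$.
   Context: Adequate monoid: a monoid $M$ whose idempotents commute and in which every $\mathcal{L}^*$-class and every $\mathcal{R}^*$-class contains an idempotent, where $a\,\mathcal{L}^*\,b$ iff ($ax=ay\Leftrightarrow bx=by$ for all $x,y\in M$) and $a\,\mathcal{R}^*\,b$ iff ($xa=ya\Leftrightarrow xb=yb$ for all $x,y\in M$); $x^+$ and $x^*$ denote the unique idempotents $\mathcal{R}^*$- and $\mathcal{L}^*$-related to $x$; $M$ is a $(2,1,1,0)$-algebra. Trees: a $\Sigma$-tree is a finite directed graph whose underlying undirected graph is a tree, each edge $e$ having initial vertex $\alpha(e)$, terminal vertex $\omega(e)$ and label $\lambda(e)\in\Sigma$, with distinguished start and end vertices such that there is a (possibly empty) directed path (the trunk) from start to end vertex; trivial if it has one vertex, idempotent if start equals end vertex. A morphism $X\to Y$ maps vertices to vertices and edges to edges preserving $\alpha,\omega,\lambda$ and start/end vertices; isomorphisms are bijective morphisms. A retraction is an idempotent morphism $X\to X$, its image a retract; $X$ is pruned if it has no non-identity retraction. Every tree has a pruned retract, unique up to isomorphism, with isomorphism type $\overline{X}$. $T^1(\Sigma)$ is the set of isomorphism types of pruned trees. Unpruned operations: $X\times Y$ identifies the end vertex of (a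 copy of) $X$ with the start vertex of (a disjoint copy of) $Y$, start vertex that of $X$, end vertex that of $Y$; $X^{(+)}$ is $X$ with end vertex moved to the start vertex; $X^{( * )}$ is $X$ with start vertex moved to the end vertex. Pruned operations: $XY=\overline{X\times Y}$, $X^+=\overline{X^{(+)}}$, $X^*=\overline{X^{( * )}}$. $\tau$ (on idempotent trees) is defined recursively: $\tau(X)=1$ if $X$ has no edges; otherwise with $v$ the start (= end) vertex, for each edge $e$ with $\alpha(e)=v$ let $X_e$ be the component of $X$ minus $e$ containing $\omega(e)$, as an idempotent tree at $\omega(e)$, and for each edge $e$ with $\omega(e)=v$ let $X_e$ be the component of $X$ minus $e$ containing $\alpha(e)$, as an idempotent tree at $\alpha(e)$; then $\tau(X)=\prod_{e:\alpha(e)=v}[\chi(\lambda(e))\tau(X_e)]^+\cdot\prod_{e:\omega(e)=v}[\tau(X_e)\chi(\lambda(e))]^*$ (commuting idempotents, order irrelevant). For any tree $X$ with trunk vertices $v_0,\dots,v_n$ in order and $a_i$ the label of the trunk edge from $v_{i-1}$ to $v_i$, let $X_i$ be the component containing $v_i$ of $X$ with all trunk edges removed, as an idempotent tree at $v_i$; $\rho(X)=\tau(X_0)\chi(a_1)\tau(X_1)\cdots\chi(a_n)\tau(X_n)$. *)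

theory Defs
  imports Main
begin

definition Lstar :: "'m::monoid_mult \<Rightarrow> 'm \<Rightarrow> bool" where
  "Lstar a b \<longleftrightarrow> (\<forall>x y. a * x = a * y \<longleftrightarrow> b * x = b * y)"

definition Rstar :: "'m::monoid_mult \<Rightarrow> 'm \<Rightarrow> bool" where
  "Rstar a b \<longleftrightarrow> (\<forall>x y. x * a = y * a \<longleftrightarrow> x * b = y * b)"

definition idem :: "'m::monoid_mult \<Rightarrow> bool" where
  "idem e \<longleftrightarrow> e * e = e"

definition adequate :: "'m::monoid_mult itself \<Rightarrow> bool" where
  "adequate _ \<longleftrightarrow>
     (\<forall>e f :: 'm. idem e \<and> idem f \<longrightarrow> e * f = f * e) \<and>
     (\<forall>a :: 'm. \<exists>e. idem e \<and> Lstar a e) \<and>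
     (\<forall>a :: 'm. \<exists>e. idem e \<and> Rstar a e)"

definition aplus :: "'m::monoid_mult \<Rightarrow> 'm" where
  "aplus x = (THE e. idem e \<and> Rstar x e)"

definition astar :: "'m::monoid_mult \<Rightarrow> 'm" where
  "astar x = (THE e. idem e \<and> Lstar x e)"

record ('v, 'e, 's) stree =
  tverts :: "'v set"
  tedges :: "'e set"
  tsrc   :: "'e \<Rightarrow> 'v"
  ttgt   :: "'e \<Rightarrow> 'v"
  tlab   :: "'e \<Rightarrow> 's"
  tstart :: "'v"
  tend   :: "'v"

primrec is_dpath :: "('v, 'e, 's) stree \<Rightarrow> 'v \<Rightarrow> 'e list \<Rightarrow> 'v \<Rightarrow> bool" where
  "is_dpath X u [] w \<longleftrightarrow> u = w"
| "is_dpath X u (e # es) w \<longleftrightarrow> e \<in> tedges X \<and> tsrc X e = u \<and> is_dpath X (ttgt X e) es w"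

definition undir_adj :: "('v, 'e, 's) stree \<Rightarrow> ('v \<times> 'v) set" where
  "undir_adj X = (\<Union>e\<in>tedges X. {(tsrc X e, ttgt X e), (ttgt X e, tsrc X e)})"

definition is_tree :: "('v, 'e, 's) stree \<Rightarrow> bool" where
  "is_tree X \<longleftrightarrow>
     finite (tverts X) \<and> finite (tedges X) \<and>
     (\<forall>e\<in>tedges X. tsrc X e \<in> tverts X \<and> ttgt X e \<in> tverts X) \<and>
     tstart X \<in> tverts X \<and> tend X \<in> tverts X \<and>
     (\<forall>u\<in>tverts X. \<forall>w\<in>tverts X. (u, w) \<in> (undir_adj X)\<^sup>*) \<and>
     card (tedges X) + 1 = card (tverts X) \<and>
     (\<exists>es. is_dpath X (tstart X) es (tend X))"

definition is_morphism ::
  "('v, 'e, 's) stree \<Rightarrow> ('w, 'f, 's) stree \<Rightarrow> ('v \<Rightarrow> 'w) \<Rightarrow> ('e \<Rightarrow> 'f) \<Rightarrow> bool" where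
  "is_morphism X Y fv fe \<longleftrightarrow>
     (\<forall>v\<in>tverts X. fv v \<in> tverts Y) \<and>
     (\<forall>e\<in>tedges X. fe e \<in> tedges Y \<and>
        tsrc Y (fe e) = fv (tsrc X e) \<and> ttgt Y (fe e) = fv (ttgt X e) \<and>
        tlab Y (fe e) = tlab X e) \<and>
     fv (tstart X) = tstart Y \<and> fv (tend X) = tend Y"

definition is_retraction :: "('v, 'e, 's) stree \<Rightarrow> ('v \<Rightarrow> 'v) \<Rightarrow> ('e \<Rightarrow> 'e) \<Rightarrow> bool" where
  "is_retraction X fv fe \<longleftrightarrow> is_morphism X X fv fe \<and>
     (\<forall>v\<in>tverts X. fv (fv v) = fv v) \<and> (\<forall>e\<in>tedges X. fe (fe e) = fe e)"

definition retract_image ::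
  "('v, 'e, 's) stree \<Rightarrow> ('v \<Rightarrow> 'v) \<Rightarrow> ('e \<Rightarrow> 'e) \<Rightarrow> ('v, 'e, 's) stree" where
  "retract_image X fv fe = X\<lparr>tverts := fv ` tverts X, tedges := fe ` tedges X\<rparr>"

definition is_pruned :: "('v, 'e, 's) stree \<Rightarrow> bool" where
  "is_pruned X \<longleftrightarrow> (\<forall>fv fe. is_retraction X fv fe \<longrightarrow>
      (\<forall>v\<in>tverts X. fv v = v) \<and> (\<forall>e\<in>tedges X. fe e = e))"

text \<open>Z is a pruned retract of X (its isomorphism type is the pruned form of X).\<close>
definition is_pruned_retract :: "('v, 'e, 's) stree \<Rightarrow> ('v, 'e, 's) stree \<Rightarrow> bool" where
  "is_pruned_retract Z X \<longleftrightarrow>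
     (\<exists>fv fe. is_retraction X fv fe \<and> Z = retract_image X fv fe) \<and> is_pruned Z"

definition glue :: "('v, 'e, 's) stree \<Rightarrow> ('w, 'f, 's) stree \<Rightarrow> 'w \<Rightarrow> 'v + 'w" where
  "glue X Y w = (if w = tstart Y then Inl (tend X) else Inr w)"

definition tprod :: "('v, 'e, 's) stree \<Rightarrow> ('w, 'f, 's) stree \<Rightarrow> ('v + 'w, 'e + 'f, 's) stree" where
  "tprod X Y = \<lparr> tverts = Inl ` tverts X \<union> glue X Y ` tverts Y,
                tedges = Inl ` tedges X \<union> Inr ` tedges Y,
                tsrc = case_sum (Inl \<circ> tsrc X) (glue X Y \<circ> tsrc Y),
                ttgt = case_sum (Inl \<circ> ttgt X) (glue X Y \<circ> ttgt Y),
                tlab = case_sum (tlab X) (tlab Y),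
                tstart = Inl (tstart X),
                tend = glue X Y (tend Y) \<rparr>"

definition tplus :: "('v, 'e, 's) stree \<Rightarrow> ('v, 'e, 's) stree" where
  "tplus X = X\<lparr>tend := tstart X\<rparr>"

definition tstar :: "('v, 'e, 's) stree \<Rightarrow> ('v, 'e, 's) stree" where
  "tstar X = X\<lparr>tstart := tend X\<rparr>"

text \<open>Product over a finite set of (commuting idempotent) factors, in some enumeration order.\<close>
definition prodE :: "'e set \<Rightarrow> ('e \<Rightarrow> 'm::monoid_mult) \<Rightarrow> 'm" where
  "prodE S f = prod_list (map f (SOME xs. set xs = S \<and> distinct xs))"

text \<open>tauF chi X n v P: the value tau of the component of X minus the edges P containing v,
  viewed as an idempotent tree at v, computed with recursion depth n (the excluded edge
  in recursive calls is the edge towards the parent).\<close>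
primrec tauF :: "('s \<Rightarrow> 'm::monoid_mult) \<Rightarrow> ('v, 'e, 's) stree \<Rightarrow> nat \<Rightarrow> 'v \<Rightarrow> 'e set \<Rightarrow> 'm" where
  "tauF chi X 0 v P = 1"
| "tauF chi X (Suc n) v P =
     prodE {e\<in>tedges X. tsrc X e = v \<and> e \<notin> P}
       (\<lambda>e. aplus (chi (tlab X e) * tauF chi X n (ttgt X e) {e})) *
     prodE {e\<in>tedges X. ttgt X e = v \<and> e \<notin> P}
       (\<lambda>e. astar (tauF chi X n (tsrc X e) {e} * chi (tlab X e)))"

text \<open>tau on an idempotent tree (depth card edges + 1 suffices).\<close>
definition tau :: "('s \<Rightarrow> 'm::monoid_mult) \<Rightarrow> ('v, 'e, 's) stree \<Rightarrow> 'm" where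
  "tau chi X = tauF chi X (Suc (card (tedges X))) (tstart X) {}"

definition trunk :: "('v, 'e, 's) stree \<Rightarrow> 'e list" where
  "trunk X = (THE es. is_dpath X (tstart X) es (tend X))"

text \<open>rho X = tau(X_0) chi(a_1) tau(X_1) ... chi(a_n) tau(X_n).\<close>
definition rho :: "('s \<Rightarrow> 'm::monoid_mult) \<Rightarrow> ('v, 'e, 's) stree \<Rightarrow> 'm" where
  "rho chi X =
     (let es = trunk X; N = Suc (card (tedges X));
          tv = (\<lambda>v. tauF chi X N v (set es))
      in tv (tstart X) * prod_list (map (\<lambda>e. chi (tlab X e) * tv (ttgt X e)) es))"

end

(*
  rho is read off the trunk. If tau_i is the value of tau on the whole tree, re-rooted at the
  i-th trunk vertex, and a_i is the label of the i-th trunk edge, then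
  rho(X) = tau_0 chi(a_1) tau_1 ... chi(a_n) tau_n, tau_0 = rho(X)^+ and tau_n = rho(X)^*. This is an
  identity in the adequate monoid, found by splitting each tau_i into the parts of the tree on
  either side of the trunk vertex.

  A retraction does not move the trunk, and tau can only decrease along morphisms; applied to
  the retraction and to the inclusion of its image this shows that every tau_i is unchanged, so
  rho is constant on retract classes and it suffices to treat the unpruned operations.
  Moving the end vertex to the start, or the start to the end, leaves an empty trunk at the old
  start or end vertex, whose rho is tau_0 or tau_n. In the glued tree X x Y the parts hanging off
  the trunk are those of X and of Y, except at the glue vertex, where the values of the two
  parts multiply.
*)

theory Submission
  imports Defs
begin

section \<open>Adequate monoids\<close>

definition idem_le :: "'m::monoid_mult \<Rightarrow> 'm \<Rightarrow> bool" (infix "\<preceq>" 50) where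
  "e \<preceq> f \<longleftrightarrow> e * f = e"

lemma idem_le_refl: "idem e \<Longrightarrow> e \<preceq> e"
  by (simp add: idem_le_def idem_def)

lemma idem_le_trans [trans]: "a \<preceq> b \<Longrightarrow> b \<preceq> c \<Longrightarrow> a \<preceq> c"
  unfolding idem_le_def by (metis mult.assoc)

lemma idem_le_one: "a \<preceq> 1"
  by (simp add: idem_le_def)

lemma idem_le_mult: "e \<preceq> a \<Longrightarrow> e \<preceq> b \<Longrightarrow> e \<preceq> a * b"
  unfolding idem_le_def by (metis mult.assoc)

lemma idem_one [simp]: "idem 1"
  by (simp add: idem_def)

lemma Rstar_refl: "Rstar a a"
  and Rstar_sym: "Rstar a b \<Longrightarrow> Rstar b a"
  and Rstar_trans: "Rstar a b \<Longrightarrow> Rstar b c \<Longrightarrow> Rstar a c"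
  unfolding Rstar_def by blast+

lemma Lstar_refl: "Lstar a a"
  and Lstar_sym: "Lstar a b \<Longrightarrow> Lstar b a"
  and Lstar_trans: "Lstar a b \<Longrightarrow> Lstar b c \<Longrightarrow> Lstar a c"
  unfolding Lstar_def by blast+

lemma Rstar_mult_left:
  assumes "Rstar b c"
  shows "Rstar (a * b) (a * c)"
  unfolding Rstar_def
proof (intro allI)
  fix x y
  have "(x * a) * b = (y * a) * b \<longleftrightarrow> (x * a) * c = (y * a) * c"
    using assms unfolding Rstar_def by blast
  then show "x * (a * b) = y * (a * b) \<longleftrightarrow> x * (a * c) = y * (a * c)"
    by (simp only: mult.assoc)
qed

lemma Lstar_mult_right:
  assumes "Lstar a c"
  shows "Lstar (a * b) (c * b)"
  unfolding Lstar_def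
proof (intro allI)
  fix x y
  have "a * (b * x) = a * (b * y) \<longleftrightarrow> c * (b * x) = c * (b * y)"
    using assms unfolding Lstar_def by blast
  then show "a * b * x = a * b * y \<longleftrightarrow> c * b * x = c * b * y"
    by (simp only: mult.assoc)
qed

lemma idem_Rstar_absorb: "idem e \<Longrightarrow> Rstar a e \<Longrightarrow> e * a = a"
  unfolding Rstar_def idem_def by (metis mult_1_left)

lemma idem_Lstar_absorb: "idem e \<Longrightarrow> Lstar a e \<Longrightarrow> a * e = a"
  unfolding Lstar_def idem_def by (metis mult_1_right)

locale adequate_monoid =
  assumes adequate: "adequate TYPE('m::monoid_mult)"
begin

lemma idem_commute: "idem (e::'m) \<Longrightarrow> idem f \<Longrightarrow> e * f = f * e"
  using adequate unfolding adequate_def by blast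

lemma idem_mult:
  assumes "idem (e::'m)" "idem f"
  shows "idem (e * f)"
proof -
  have "(e * f) * (e * f) = e * (f * e) * f"
    by (simp add: mult.assoc)
  also have "\<dots> = (e * e) * (f * f)"
    using idem_commute[OF assms] by (metis mult.assoc)
  finally show ?thesis
    using assms by (simp add: idem_def)
qed

lemma idem_le_antisym: "idem (a::'m) \<Longrightarrow> idem b \<Longrightarrow> a \<preceq> b \<Longrightarrow> b \<preceq> a \<Longrightarrow> a = b"
  unfolding idem_le_def by (metis idem_commute)

lemma idem_mult_left_commute: "idem (a::'m) \<Longrightarrow> idem b \<Longrightarrow> a * (b * c) = b * (a * c)"
  by (metis idem_commute mult.assoc)

lemma idem_mult_le_right: "idem (a::'m) \<Longrightarrow> idem b \<Longrightarrow> a * b \<preceq> b"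
  unfolding idem_le_def idem_def by (simp add: mult.assoc)

lemma idem_mult_le_left: "idem (a::'m) \<Longrightarrow> idem b \<Longrightarrow> a * b \<preceq> a"
  by (metis idem_commute idem_mult_le_right)

lemma idem_le_mult_mono:
  "idem (a::'m) \<Longrightarrow> idem b \<Longrightarrow> idem c \<Longrightarrow> idem d \<Longrightarrow> a \<preceq> c \<Longrightarrow> b \<preceq> d \<Longrightarrow> a * b \<preceq> c * d"
  by (metis idem_le_mult idem_le_trans[OF idem_mult_le_left] idem_le_trans[OF idem_mult_le_right])

lemma Rstar_idem_eq: "idem (e::'m) \<Longrightarrow> idem f \<Longrightarrow> Rstar e f \<Longrightarrow> e = f"
  using idem_Rstar_absorb[of e f] idem_Rstar_absorb[of f e] Rstar_sym idem_commute by metis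

lemma Lstar_idem_eq: "idem (e::'m) \<Longrightarrow> idem f \<Longrightarrow> Lstar e f \<Longrightarrow> e = f"
  using idem_Lstar_absorb[of e f] idem_Lstar_absorb[of f e] Lstar_sym idem_commute by metis

lemma aplus_eqI:
  assumes "idem e" "Rstar (a::'m) e"
  shows "aplus a = e"
  unfolding aplus_def
proof (rule the_equality)
  show "\<And>f. idem f \<and> Rstar a f \<Longrightarrow> f = e"
    using assms by (metis Rstar_idem_eq Rstar_sym Rstar_trans)
qed (use assms in simp)

lemma astar_eqI:
  assumes "idem e" "Lstar (a::'m) e"
  shows "astar a = e"
  unfolding astar_def
proof (rule the_equality)
  show "\<And>f. idem f \<and> Lstar a f \<Longrightarrow> f = e"
    using assms by (metis Lstar_idem_eq Lstar_sym Lstar_trans)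
qed (use assms in simp)

lemma idem_aplus [simp]: "idem (aplus (a::'m))"
  and Rstar_aplus: "Rstar a (aplus a)"
proof -
  obtain e where "idem e" "Rstar a e"
    using adequate unfolding adequate_def by blast
  then show "idem (aplus a)" "Rstar a (aplus a)"
    using aplus_eqI by simp_all
qed

lemma idem_astar [simp]: "idem (astar (a::'m))"
  and Lstar_astar: "Lstar a (astar a)"
proof -
  obtain e where "idem e" "Lstar a e"
    using adequate unfolding adequate_def by blast
  then show "idem (astar a)" "Lstar a (astar a)"
    using astar_eqI by simp_all
qed

lemma aplus_absorb: "aplus a * (a::'m) = a"
  by (rule idem_Rstar_absorb[OF idem_aplus Rstar_aplus])

lemma astar_absorb: "(a::'m) * astar a = a"
  by (rule idem_Lstar_absorb[OF idem_astar Lstar_astar])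

lemma aplus_idem: "idem (e::'m) \<Longrightarrow> aplus e = e"
  by (rule aplus_eqI) (auto simp: Rstar_refl)

lemma astar_idem: "idem (e::'m) \<Longrightarrow> astar e = e"
  by (rule astar_eqI) (auto simp: Lstar_refl)

lemma aplus_mult_aplus: "aplus ((a::'m) * aplus b) = aplus (a * b)"
proof (rule aplus_eqI)
  have "Rstar (a * aplus b) (a * b)"
    by (rule Rstar_mult_left[OF Rstar_sym[OF Rstar_aplus]])
  then show "Rstar (a * aplus b) (aplus (a * b))"
    using Rstar_aplus by (rule Rstar_trans)
qed simp

lemma astar_astar_mult: "astar (astar (a::'m) * b) = astar (a * b)"
proof (rule astar_eqI)
  have "Lstar (astar a * b) (a * b)"
    by (rule Lstar_mult_right[OF Lstar_sym[OF Lstar_astar]])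
  then show "Lstar (astar a * b) (astar (a * b))"
    using Lstar_astar by (rule Lstar_trans)
qed simp

lemma aplus_idem_mult: "idem (e::'m) \<Longrightarrow> aplus (e * a) = e * aplus a"
  by (metis aplus_idem aplus_mult_aplus idem_aplus idem_mult)

lemma astar_mult_idem: "idem (e::'m) \<Longrightarrow> astar (a * e) = astar a * e"
  by (metis astar_idem astar_astar_mult idem_astar idem_mult)

lemma aplus_mult_le: "aplus ((a::'m) * b) \<preceq> aplus a"
proof -
  have "aplus a * (a * b) = 1 * (a * b)"
    by (simp add: aplus_absorb flip: mult.assoc)
  then have "aplus a * aplus (a * b) = aplus (a * b)"
    using Rstar_aplus[of "a * b"] unfolding Rstar_def by (metis mult_1_left)
  then show ?thesis
    unfolding idem_le_def by (metis idem_aplus idem_commute)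
qed

lemma astar_mult_le: "astar ((a::'m) * b) \<preceq> astar b"
proof -
  have "(a * b) * astar b = (a * b) * 1"
    by (simp add: astar_absorb mult.assoc)
  then show ?thesis
    using Lstar_astar[of "a * b"] unfolding Lstar_def idem_le_def by (metis mult_1_right)
qed

lemma aplus_mono:
  assumes "idem (e::'m)" "idem f" "e \<preceq> f"
  shows "aplus (x * e) \<preceq> aplus (x * f)"
proof -
  have "e = f * e"
    using assms idem_commute unfolding idem_le_def by metis
  then have "x * e = (x * f) * e"
    by (metis mult.assoc)
  then show ?thesis
    using aplus_mult_le[of "x * f" e] by simp
qed

lemma astar_mono:
  assumes "(e::'m) \<preceq> f"
  shows "astar (e * x) \<preceq> astar (f * x)"
proof -
  have "e * x = e * (f * x)"
    using assms unfolding idem_le_def by (metis mult.assoc)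
  then show ?thesis
    using astar_mult_le[of e "f * x"] by simp
qed


end

section \<open>Products of commuting idempotents\<close>

lemma prodE_empty [simp]: "prodE {} (f :: 'a \<Rightarrow> 'b::monoid_mult) = 1"
proof -
  have "(SOME xs :: 'a list. set xs = {} \<and> distinct xs) = []"
    by (rule some_equality) auto
  then show ?thesis
    by (simp only: prodE_def) simp
qed

lemma prodE_cong:
  assumes "finite S" "\<And>s. s \<in> S \<Longrightarrow> f s = g s"
  shows "prodE S f = prodE S g"
proof -
  have "\<exists>ys. set ys = S \<and> distinct ys"
    using assms(1) finite_distinct_list by blast
  then have "set (SOME ys. set ys = S \<and> distinct ys) = S"
    by (metis (mono_tags, lifting) someI_ex)
  then show ?thesis
    unfolding prodE_def using assms(2) by (metis (no_types, lifting) map_eq_conv)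
qed

context adequate_monoid
begin

lemma idem_prod_list: "(\<And>x. idem (f x)) \<Longrightarrow> idem (prod_list (map f xs) :: 'm)"
  by (induction xs) (auto intro: idem_mult)

lemma prod_list_perm:
  assumes "distinct xs" "distinct ys" "set xs = set ys" "\<And>x. idem (f x)"
  shows "prod_list (map f xs) = (prod_list (map f ys) :: 'm)"
  using assms(1-3)
proof (induction xs arbitrary: ys)
  case (Cons x xs)
  then obtain ys1 ys2 where ys: "ys = ys1 @ x # ys2"
    by (metis list.set_intros(1) split_list)
  have "prod_list (map f ys) = prod_list (map f ys1) * (f x * prod_list (map f ys2))"
    using ys by (simp add: mult.assoc)
  also have "\<dots> = f x * prod_list (map f (ys1 @ ys2))"
    using idem_commute[OF assms(4) idem_prod_list[of f ys1, OF assms(4)]]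
    by (simp flip: mult.assoc)
  also have "prod_list (map f (ys1 @ ys2)) = prod_list (map f xs)"
  proof (intro Cons.IH[symmetric])
    have "set xs = set ys - {x}" "set (ys1 @ ys2) = set ys - {x}"
      using Cons.prems ys by auto
    then show "set xs = set (ys1 @ ys2)" by simp
  qed (use Cons.prems ys in auto)
  finally show ?case by simp
qed simp

text \<open>\<open>prodE\<close> multiplies in an unspecified order, which is harmless for idempotent factors.\<close>
lemma prodE_eq_prod_list:
  assumes "distinct xs" "set xs = S" "\<And>x. idem (f x)"
  shows "prodE S f = (prod_list (map f xs) :: 'm)"
proof -
  have "\<exists>ys. set ys = S \<and> distinct ys"
    using assms(1,2) by blast
  then have "set (SOME ys. set ys = S \<and> distinct ys) = S \<and> distinct (SOME ys. set ys = S \<and> distinct ys)"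
    by (rule someI_ex)
  then show ?thesis
    unfolding prodE_def using assms by (intro prod_list_perm) auto
qed

lemma prodE_union:
  assumes "finite A" "finite B" "A \<inter> B = {}" "\<And>x. idem (f x)"
  shows "prodE (A \<union> B) f = prodE A f * (prodE B f :: 'm)"
proof -
  obtain xs ys where "set xs = A" "distinct xs" "set ys = B" "distinct ys"
    using assms(1,2) finite_distinct_list by metis
  then show ?thesis
    using assms(3,4) by (simp add: prodE_eq_prod_list[of "xs @ ys"] prodE_eq_prod_list[of xs]
        prodE_eq_prod_list[of ys])
qed

lemma prodE_insert:
  assumes "finite S" "a \<notin> S" "\<And>x. idem (f x)"
  shows "prodE (insert a S) f = f a * (prodE S f :: 'm)"
  using prodE_union[of "{a}" S f] prodE_eq_prod_list[of "[a]" "{a}" f] assms by simp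

lemma prodE_image:
  assumes "finite S" "inj_on h S" "\<And>x. idem (f x)"
  shows "prodE (h ` S) f = (prodE S (\<lambda>x. f (h x)) :: 'm)"
proof -
  obtain xs where "set xs = S" "distinct xs"
    using assms(1) finite_distinct_list by blast
  then show ?thesis
    using assms(2,3) by (simp add: prodE_eq_prod_list[of "map h xs"] prodE_eq_prod_list[of xs]
        distinct_map comp_def)
qed

lemma prodE_reindex:
  assumes "finite S" "inj_on h S" "\<And>x. idem (f x)" "\<And>x. x \<in> S \<Longrightarrow> f (h x) = g x"
  shows "prodE (h ` S) f = (prodE S g :: 'm)"
proof -
  have "prodE (h ` S) f = prodE S (\<lambda>x. f (h x))"
    by (rule prodE_image[OF assms(1-3)])
  also have "\<dots> = prodE S g"
    using assms(1,4) by (rule prodE_cong)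
  finally show ?thesis .
qed

lemma prodE_Inl_Inr:
  assumes "finite A" "finite B" "\<And>x. idem (f x)"
    and "\<And>a. a \<in> A \<Longrightarrow> f (Inl a) = g a" "\<And>b. b \<in> B \<Longrightarrow> f (Inr b) = h b"
  shows "prodE (Inl ` A \<union> Inr ` B) f = prodE A g * (prodE B h :: 'm)"
proof -
  have "prodE (Inl ` A \<union> Inr ` B) f = prodE (Inl ` A) f * prodE (Inr ` B) f"
    using assms by (intro prodE_union) auto
  then show ?thesis
    using assms by (simp add: prodE_reindex)
qed

lemma idem_prodE: "(\<And>x. idem (f x)) \<Longrightarrow> idem (prodE S f :: 'm)"
  unfolding prodE_def by (rule idem_prod_list)

lemma prodE_le:
  assumes "finite S" "s \<in> S" "\<And>x. idem (f x)"
  shows "prodE S f \<preceq> (f s :: 'm)"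
  using prodE_insert[of "S - {s}" s f] assms
  by (simp add: insert_absorb idem_mult_le_left idem_prodE)

lemma le_prodE:
  assumes "finite S" "\<And>s. s \<in> S \<Longrightarrow> e \<preceq> (f s :: 'm)" "\<And>x. idem (f x)"
  shows "e \<preceq> prodE S f"
  using assms(1,2)
proof (induction S rule: finite_induct)
  case (insert x F)
  then show ?case
    using assms(3) by (simp add: prodE_insert idem_le_mult)
qed (simp add: idem_le_one)

lemma prodE_mono:
  assumes "finite S" "\<And>s. s \<in> S \<Longrightarrow> f s \<preceq> (g s :: 'm)" "\<And>x. idem (f x)" "\<And>x. idem (g x)"
  shows "prodE S f \<preceq> prodE S g"
  using assms by (intro le_prodE) (metis idem_le_trans prodE_le)+

end

section \<open>Monotonicity of \<open>tauF\<close>\<close>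

abbreviation out_edges :: "('v, 'e, 's) stree \<Rightarrow> 'v \<Rightarrow> 'e set \<Rightarrow> 'e set" where
  "out_edges X v P \<equiv> {e \<in> tedges X. tsrc X e = v \<and> e \<notin> P}"

abbreviation in_edges :: "('v, 'e, 's) stree \<Rightarrow> 'v \<Rightarrow> 'e set \<Rightarrow> 'e set" where
  "in_edges X v P \<equiv> {e \<in> tedges X. ttgt X e = v \<and> e \<notin> P}"

definition out_factor :: "('s \<Rightarrow> 'm::monoid_mult) \<Rightarrow> ('v, 'e, 's) stree \<Rightarrow> nat \<Rightarrow> 'e \<Rightarrow> 'm" where
  "out_factor chi X n e = aplus (chi (tlab X e) * tauF chi X n (ttgt X e) {e})"

definition in_factor :: "('s \<Rightarrow> 'm::monoid_mult) \<Rightarrow> ('v, 'e, 's) stree \<Rightarrow> nat \<Rightarrow> 'e \<Rightarrow> 'm" where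
  "in_factor chi X n e = astar (tauF chi X n (tsrc X e) {e} * chi (tlab X e))"

lemma tauF_Suc:
  "tauF chi X (Suc n) v P =
     prodE (out_edges X v P) (out_factor chi X n) * prodE (in_edges X v P) (in_factor chi X n)"
  unfolding out_factor_def[abs_def] in_factor_def[abs_def] by simp

declare tauF.simps(2) [simp del]

lemma tauF_cong_incident:
  assumes "\<And>e. e \<in> tedges X \<Longrightarrow> tsrc X e = v \<or> ttgt X e = v \<Longrightarrow> e \<in> P \<longleftrightarrow> e \<in> P'"
  shows "tauF chi X n v P = tauF chi X n v P'"
proof (cases n)
  case (Suc k)
  have "out_edges X v P = out_edges X v P'" "in_edges X v P = in_edges X v P'"
    using assms by auto
  then show ?thesis
    using Suc by (simp add: tauF_Suc)
qed simp

definition edge_hom :: "('v, 'e, 's) stree \<Rightarrow> ('w, 'f, 's) stree \<Rightarrow> ('v \<Rightarrow> 'w) \<Rightarrow> ('e \<Rightarrow> 'f) \<Rightarrow> bool" where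
  "edge_hom X Y fv fe \<longleftrightarrow> (\<forall>e\<in>tedges X. fe e \<in> tedges Y \<and> tsrc Y (fe e) = fv (tsrc X e) \<and>
      ttgt Y (fe e) = fv (ttgt X e) \<and> tlab Y (fe e) = tlab X e)"

definition loop_free :: "('v, 'e, 's) stree \<Rightarrow> bool" where
  "loop_free X \<longleftrightarrow> (\<forall>e\<in>tedges X. tsrc X e \<noteq> ttgt X e)"

context adequate_monoid
begin

lemma idem_out_factor [simp]: "idem (out_factor chi X n e :: 'm)"
  by (simp add: out_factor_def)

lemma idem_in_factor [simp]: "idem (in_factor chi X n e :: 'm)"
  by (simp add: in_factor_def)

lemma idem_tauF [simp]: "idem (tauF chi X n v P :: 'm)"
  by (cases n) (simp_all add: tauF_Suc idem_mult idem_prodE)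

lemma tauF_Suc_le:
  assumes "finite (tedges X)"
  shows "tauF chi X (Suc n) v P \<preceq> (tauF chi X n v P :: 'm)"
proof (induction n arbitrary: v P)
  case (Suc n)
  have "out_factor chi X (Suc n) e \<preceq> out_factor chi X n e" for e
    unfolding out_factor_def by (simp add: aplus_mono Suc.IH)
  moreover have "in_factor chi X (Suc n) e \<preceq> in_factor chi X n e" for e
    unfolding in_factor_def by (simp add: astar_mono Suc.IH)
  ultimately show ?case
    unfolding tauF_Suc[of _ _ "Suc n"] tauF_Suc[of _ _ n] using assms
    by (intro idem_le_mult_mono prodE_mono) (simp_all add: idem_prodE)
qed (simp add: idem_le_one)

lemma tauF_antimono:
  assumes "finite (tedges X)" "n \<le> m"
  shows "tauF chi X m v P \<preceq> (tauF chi X n v P :: 'm)"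
  using assms(2)
proof (induction m rule: dec_induct)
  case (step m)
  then show ?case
    using tauF_Suc_le[OF assms(1), of chi m v P] idem_le_trans by blast
qed (simp add: idem_le_refl)

lemma tauF_split_out:
  assumes "finite (tedges X)" "g \<in> tedges X" "tsrc X g = w" "g \<notin> P" "ttgt X g \<noteq> w"
  shows "tauF chi X (Suc n) w P = out_factor chi X n g * (tauF chi X (Suc n) w (insert g P) :: 'm)"
proof -
  have "out_edges X w P = insert g (out_edges X w (insert g P))"
    "in_edges X w P = in_edges X w (insert g P)"
    using assms by auto
  then show ?thesis
    using assms(1) by (simp add: tauF_Suc prodE_insert mult.assoc)
qed

lemma tauF_split_in:
  assumes "finite (tedges X)" "g \<in> tedges X" "ttgt X g = w" "g \<notin> P" "tsrc X g \<noteq> w"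
  shows "tauF chi X (Suc n) w P = in_factor chi X n g * (tauF chi X (Suc n) w (insert g P) :: 'm)"
proof -
  have "out_edges X w P = out_edges X w (insert g P)"
    "in_edges X w P = insert g (in_edges X w (insert g P))"
    using assms by auto
  then show ?thesis
    using assms(1) by (simp add: tauF_Suc prodE_insert idem_mult_left_commute idem_prodE)
qed

text \<open>The inductive step of \<open>tauF_out_edge_le\<close>: \<open>s \<preceq> s'\<close> are the values at the source of an edge
  with that edge removed, at two consecutive depths, \<open>t\<close> is the value at its target and \<open>X\<close> a bound
  for the value at the target with nothing removed.\<close>
lemma aplus_transfer_le:
  assumes s: "idem (s::'m)" and s': "idem s'" and t: "idem t" and X: "idem X"
    and ss': "s \<preceq> s'" and tX: "t * astar (s' * x) \<preceq> X"
  shows "s * aplus (x * t) \<preceq> aplus (x * X)"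
proof -
  define u where "u = astar (s * x)"
  define u' where "u' = astar (s' * x)"
  have u: "idem u" and u': "idem u'" by (simp_all add: u_def u'_def)
  have uu': "u = u * u'"
    using astar_mono[OF ss', of x] unfolding u_def u'_def idem_le_def by simp
  have "s * aplus (x * t) = aplus (s * (x * t))" by (simp add: aplus_idem_mult s)
  also have "s * (x * t) = (s * x) * u * t" by (simp add: u_def astar_absorb mult.assoc)
  also have "\<dots> = (s * x) * u * u' * t" using uu' by (simp add: mult.assoc)
  also have "\<dots> = s * (x * (u' * t)) * u"
    using idem_commute[OF u idem_mult[OF u' t]] by (simp add: mult.assoc)
  finally have eq: "s * aplus (x * t) = aplus (s * (x * (u' * t)) * u)" .
  have "aplus (s * (x * (u' * t)) * u) \<preceq> aplus (s * (x * (u' * t)))"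
    by (metis aplus_mult_le mult.assoc)
  also have "aplus (s * (x * (u' * t))) = s * aplus (x * (u' * t))"
    by (simp add: aplus_idem_mult s)
  also have "\<dots> \<preceq> aplus (x * (u' * t))"
    by (rule idem_mult_le_right[OF s idem_aplus])
  also have "\<dots> \<preceq> aplus (x * X)"
  proof (rule aplus_mono[OF idem_mult[OF u' t] X])
    show "u' * t \<preceq> X" using tX idem_commute[OF t u'] unfolding u'_def by simp
  qed
  finally show ?thesis using eq by simp
qed

lemma astar_transfer_le:
  assumes s: "idem (s::'m)" and s': "idem s'" and t: "idem t" and X: "idem X"
    and ss': "s \<preceq> s'" and tX: "t * aplus (x * s') \<preceq> X"
  shows "s * astar (t * x) \<preceq> astar (X * x)"
proof -
  define v where "v = aplus (x * s)"
  define v' where "v' = aplus (x * s')"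
  have v: "idem v" and v': "idem v'" by (simp_all add: v_def v'_def)
  have vv': "v = v * v'"
  proof -
    have "x * s = x * s' * s"
      using ss' idem_commute[OF s s'] unfolding idem_le_def by (metis mult.assoc)
    then show ?thesis
      using aplus_mult_le[of "x * s'" s] unfolding v_def v'_def idem_le_def by simp
  qed
  have "s * astar (t * x) = astar (t * x * s)"
    using idem_commute[OF s idem_astar] by (simp add: astar_mult_idem s)
  also have "t * x * s = t * (v * (x * s))" by (simp add: v_def aplus_absorb mult.assoc)
  also have "\<dots> = t * v * v' * (x * s)" using vv' by (simp add: mult.assoc)
  also have "\<dots> = v * ((v' * t) * x * s)"
    using idem_commute[OF t v] idem_commute[OF t v'] by (metis mult.assoc)
  finally have eq: "s * astar (t * x) = astar (v * ((v' * t) * x * s))" .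
  have "astar (v * ((v' * t) * x * s)) \<preceq> astar ((v' * t) * x * s)"
    by (rule astar_mult_le)
  also have "astar ((v' * t) * x * s) = astar ((v' * t) * x) * s"
    by (simp add: astar_mult_idem s)
  also have "\<dots> \<preceq> astar ((v' * t) * x)"
    by (rule idem_mult_le_left[OF idem_astar s])
  also have "\<dots> \<preceq> astar (X * x)"
  proof (rule astar_mono)
    show "v' * t \<preceq> X" using tX idem_commute[OF t v'] unfolding v'_def by simp
  qed
  finally show ?thesis using eq by simp
qed

lemma tauF_out_edge_le:
  assumes fin: "finite (tedges Y)" and lf: "loop_free Y" and g: "g \<in> tedges Y" "tsrc Y g = w"
    and X': "idem X'" and IH: "tauF chi Y M (ttgt Y g) {} \<preceq> X'"
  shows "tauF chi Y (Suc M) w {} \<preceq> aplus (chi (tlab Y g) * X' :: 'm)"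
proof -
  define x where "x = chi (tlab Y g)"
  define s where "s = tauF chi Y (Suc M) w {g}"
  have no_loop: "ttgt Y g \<noteq> w"
    using lf g unfolding loop_free_def by auto
  have "tauF chi Y (Suc M) w {} = aplus (x * tauF chi Y M (ttgt Y g) {g}) * s"
    using tauF_split_out[OF fin g _ no_loop, of "{}" chi M] by (simp add: s_def x_def out_factor_def)
  then have split: "tauF chi Y (Suc M) w {} = s * aplus (x * tauF chi Y M (ttgt Y g) {g})"
    using idem_commute[of s] by (simp add: s_def)
  show ?thesis
  proof (cases M)
    case 0
    then have "X' = 1"
      using IH unfolding idem_le_def by simp
    then show ?thesis
      using split 0 by (simp add: x_def idem_mult_le_right s_def)
  next
    case (Suc M')
    define t where "t = tauF chi Y M (ttgt Y g) {g}"
    define s' where "s' = tauF chi Y M' w {g}"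
    have "tauF chi Y M (ttgt Y g) {} = astar (s' * x) * t"
      using tauF_split_in[OF fin g(1) refl _, of "{}" chi M'] g no_loop Suc
      by (simp add: t_def s'_def x_def in_factor_def)
    then have "t * astar (s' * x) \<preceq> X'"
      using IH idem_commute[of t "astar (s' * x)"] unfolding t_def by simp
    moreover have "s \<preceq> s'"
      unfolding s_def s'_def Suc by (rule tauF_antimono[OF fin]) simp
    ultimately have "s * aplus (x * t) \<preceq> aplus (x * X')"
      by (intro aplus_transfer_le) (simp_all add: s_def s'_def t_def X')
    then show ?thesis
      using split by (simp add: t_def x_def)
  qed
qed

lemma tauF_in_edge_le:
  assumes fin: "finite (tedges Y)" and lf: "loop_free Y" and g: "g \<in> tedges Y" "ttgt Y g = w"
    and X': "idem X'" and IH: "tauF chi Y M (tsrc Y g) {} \<preceq> X'"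
  shows "tauF chi Y (Suc M) w {} \<preceq> astar (X' * chi (tlab Y g) :: 'm)"
proof -
  define x where "x = chi (tlab Y g)"
  define s where "s = tauF chi Y (Suc M) w {g}"
  have no_loop: "tsrc Y g \<noteq> w"
    using lf g unfolding loop_free_def by auto
  have "tauF chi Y (Suc M) w {} = astar (tauF chi Y M (tsrc Y g) {g} * x) * s"
    using tauF_split_in[OF fin g _ no_loop, of "{}" chi M] by (simp add: s_def x_def in_factor_def)
  then have split: "tauF chi Y (Suc M) w {} = s * astar (tauF chi Y M (tsrc Y g) {g} * x)"
    using idem_commute[of s] by (simp add: s_def)
  show ?thesis
  proof (cases M)
    case 0
    then have "X' = 1"
      using IH unfolding idem_le_def by simp
    then show ?thesis
      using split 0 by (simp add: x_def idem_mult_le_right s_def)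
  next
    case (Suc M')
    define t where "t = tauF chi Y M (tsrc Y g) {g}"
    define s' where "s' = tauF chi Y M' w {g}"
    have "tauF chi Y M (tsrc Y g) {} = aplus (x * s') * t"
      using tauF_split_out[OF fin g(1) refl _, of "{}" chi M'] g no_loop Suc
      by (simp add: t_def s'_def x_def out_factor_def)
    then have "t * aplus (x * s') \<preceq> X'"
      using IH idem_commute[of t "aplus (x * s')"] unfolding t_def by simp
    moreover have "s \<preceq> s'"
      unfolding s_def s'_def Suc by (rule tauF_antimono[OF fin]) simp
    ultimately have "s * astar (t * x) \<preceq> astar (X' * x)"
      by (intro astar_transfer_le) (simp_all add: s_def s'_def t_def X')
    then show ?thesis
      using split by (simp add: t_def x_def)
  qed
qed

lemma tauF_hom_le:
  assumes finX: "finite (tedges X)" and finY: "finite (tedges Y)"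
    and hom: "edge_hom X Y fv fe" and lf: "loop_free Y"
  shows "n \<le> M \<Longrightarrow> tauF chi Y M (fv v) {} \<preceq> (tauF chi X n v P :: 'm)"
proof (induction n arbitrary: M v P)
  case (Suc n)
  then obtain M' where M: "M = Suc M'" "n \<le> M'"
    by (cases M) auto
  show ?case
    unfolding tauF_Suc[of _ _ n] M(1)
  proof (intro idem_le_mult le_prodE)
    fix e
    assume "e \<in> out_edges X v P"
    then show "tauF chi Y (Suc M') (fv v) {} \<preceq> out_factor chi X n e"
      using tauF_out_edge_le[OF finY lf, of "fe e" "fv v" "tauF chi X n (ttgt X e) {e}" chi M']
        Suc.IH[OF M(2)] hom unfolding edge_hom_def out_factor_def by simp
  next
    fix e
    assume "e \<in> in_edges X v P"
    then show "tauF chi Y (Suc M') (fv v) {} \<preceq> in_factor chi X n e"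
      using tauF_in_edge_le[OF finY lf, of "fe e" "fv v" "tauF chi X n (tsrc X e) {e}" chi M']
        Suc.IH[OF M(2)] hom unfolding edge_hom_def in_factor_def by simp
  qed (use finX in auto)
qed (simp add: idem_le_one)

end

section \<open>Reduced walks in forests\<close>

definition other_end :: "('v, 'e, 's) stree \<Rightarrow> 'e \<Rightarrow> 'v \<Rightarrow> 'v" where
  "other_end X e u = (if tsrc X e = u then ttgt X e else tsrc X e)"

fun uwalk :: "('v, 'e, 's) stree \<Rightarrow> 'v \<Rightarrow> 'e list \<Rightarrow> 'v \<Rightarrow> bool" where
  "uwalk X u [] w \<longleftrightarrow> u = w"
| "uwalk X u (e # es) w \<longleftrightarrow>
     e \<in> tedges X \<and> (tsrc X e = u \<or> ttgt X e = u) \<and> uwalk X (other_end X e u) es w"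

fun walk_verts :: "('v, 'e, 's) stree \<Rightarrow> 'v \<Rightarrow> 'e list \<Rightarrow> 'v list" where
  "walk_verts X u [] = [u]"
| "walk_verts X u (e # es) = u # walk_verts X (other_end X e u) es"

text \<open>A walk is reduced if it never traverses an edge twice in a row; \<open>P\<close> holds the edges the
  first step may not use, typically the edge the walk arrived by.\<close>
definition reduced :: "'e set \<Rightarrow> 'e list \<Rightarrow> bool" where
  "reduced P es \<longleftrightarrow> (es = [] \<or> hd es \<notin> P) \<and> successively (\<noteq>) es"

definition del_edge :: "('v, 'e, 's) stree \<Rightarrow> 'e \<Rightarrow> ('v, 'e, 's) stree" where
  "del_edge X e = X\<lparr>tedges := tedges X - {e}\<rparr>"

definition forest :: "('v, 'e, 's) stree \<Rightarrow> bool" where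
  "forest X \<longleftrightarrow> (\<forall>e\<in>tedges X. (tsrc X e, ttgt X e) \<notin> (undir_adj (del_edge X e))\<^sup>*)"

lemma reduced_Nil [simp]: "reduced P []"
  by (simp add: reduced_def)

lemma reduced_Cons [simp]: "reduced P (e # es) \<longleftrightarrow> e \<notin> P \<and> reduced {e} es"
  by (cases es) (auto simp: reduced_def successively_Cons)

lemma reduced_empty: "reduced P es \<Longrightarrow> reduced {} es"
  by (cases es) auto

lemma reduced_empty_rev:
  fixes es :: "'e list"
  shows "reduced {} (rev es) \<longleftrightarrow> reduced {} es"
proof -
  have "(\<lambda>x y. y \<noteq> x) = ((\<noteq>) :: 'e \<Rightarrow> 'e \<Rightarrow> bool)"
    by (auto simp: fun_eq_iff)
  then have "successively (\<lambda>x y. y \<noteq> x) es = successively (\<noteq>) es"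
    by (simp only:)
  then show ?thesis
    by (simp add: reduced_def)
qed

lemma uwalk_append: "uwalk X u (xs @ ys) w \<longleftrightarrow> (\<exists>m. uwalk X u xs m \<and> uwalk X m ys w)"
  by (induction xs arbitrary: u) auto

lemma uwalk_rev: "uwalk X u es w \<Longrightarrow> uwalk X w (rev es) u"
proof (induction es arbitrary: u)
  case (Cons e es)
  have "uwalk X (other_end X e u) [e] u"
    using Cons.prems by (auto simp: other_end_def)
  then show ?case
    using Cons by (auto simp: uwalk_append)
qed simp

lemma uwalk_edges: "uwalk X u es w \<Longrightarrow> set es \<subseteq> tedges X"
  by (induction es arbitrary: u) auto

lemma length_walk_verts [simp]: "length (walk_verts X u es) = Suc (length es)"
  by (induction es arbitrary: u) auto

lemma walk_verts_first: "walk_verts X u es ! 0 = u"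
  by (cases es) auto

lemma walk_verts_last: "uwalk X u es w \<Longrightarrow> walk_verts X u es ! length es = w"
  by (induction es arbitrary: u) auto

lemma walk_verts_take: "k \<le> length es \<Longrightarrow> walk_verts X u (take k es) = take (Suc k) (walk_verts X u es)"
proof (induction es arbitrary: u k)
  case (Cons e es)
  then show ?case by (cases k) auto
qed simp

lemma uwalk_take: "uwalk X u es w \<Longrightarrow> k \<le> length es \<Longrightarrow> uwalk X u (take k es) (walk_verts X u es ! k)"
proof (induction es arbitrary: u k)
  case (Cons e es)
  then show ?case by (cases k) auto
qed simp

lemma walk_verts_subset:
  "uwalk X u es w \<Longrightarrow> u \<in> tverts X \<Longrightarrow> \<forall>e\<in>tedges X. tsrc X e \<in> tverts X \<and> ttgt X e \<in> tverts X \<Longrightarrow>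
   set (walk_verts X u es) \<subseteq> tverts X"
  by (induction es arbitrary: u) (auto simp: other_end_def)

lemma other_end_ends: "tsrc X e = u \<or> ttgt X e = u \<Longrightarrow> {tsrc X e, ttgt X e} = {u, other_end X e u}"
  unfolding other_end_def by auto

lemma hd_in_walk_verts: "u \<in> set (walk_verts X u es)"
  by (cases es) auto

lemma uwalk_edge_ends:
  "uwalk X u es w \<Longrightarrow> j < length es \<Longrightarrow>
   {tsrc X (es ! j), ttgt X (es ! j)} = {walk_verts X u es ! j, walk_verts X u es ! Suc j}"
proof (induction es arbitrary: u j)
  case (Cons e es)
  then show ?case
    using other_end_ends[of X e u] walk_verts_first[of X "other_end X e u" es]
    by (cases j) auto
qed simp

lemma uwalk_edge_ends_in_verts:
  "uwalk X u es w \<Longrightarrow> e \<in> set es \<Longrightarrow> tsrc X e = v \<or> ttgt X e = v \<Longrightarrow> v \<in> set (walk_verts X u es)"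
proof (induction es arbitrary: u)
  case (Cons f es)
  show ?case
  proof (cases "e = f")
    case True
    then have "v \<in> {u, other_end X f u}"
      using Cons.prems other_end_ends[of X f u] by auto
    then show ?thesis
      using hd_in_walk_verts[of u] hd_in_walk_verts[of "other_end X f u" X es] by auto
  qed (use Cons in auto)
qed simp

lemma undir_adjI: "e \<in> tedges X \<Longrightarrow> (tsrc X e, ttgt X e) \<in> undir_adj X \<and> (ttgt X e, tsrc X e) \<in> undir_adj X"
  unfolding undir_adj_def by blast

lemma undir_adjE:
  "(a, b) \<in> undir_adj X \<Longrightarrow>
   \<exists>e\<in>tedges X. (tsrc X e = a \<and> ttgt X e = b) \<or> (tsrc X e = b \<and> ttgt X e = a)"
  unfolding undir_adj_def by blast

lemma undir_adj_sym: "(a, b) \<in> (undir_adj X)\<^sup>* \<Longrightarrow> (b, a) \<in> (undir_adj X)\<^sup>*"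
proof -
  have "sym (undir_adj X)"
    unfolding undir_adj_def sym_def by blast
  then show "(a, b) \<in> (undir_adj X)\<^sup>* \<Longrightarrow> (b, a) \<in> (undir_adj X)\<^sup>*"
    by (metis sym_rtrancl symD)
qed

lemma uwalk_connects:
  "uwalk X u es w \<Longrightarrow> e \<notin> set es \<Longrightarrow> (u, w) \<in> (undir_adj (del_edge X e))\<^sup>*"
proof (induction es arbitrary: u)
  case (Cons f es)
  then have "(u, other_end X f u) \<in> undir_adj (del_edge X e)"
    using undir_adjI[of f "del_edge X e"] by (auto simp: del_edge_def other_end_def)
  then show ?case
    using Cons by (auto intro: converse_rtrancl_into_rtrancl)
qed simp

lemma forest_loop_free: "forest X \<Longrightarrow> loop_free X"
  unfolding forest_def loop_free_def by (metis rtrancl.rtrancl_refl)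

lemma forest_edge_not_connected:
  assumes "forest X" "e \<in> tedges X" "tsrc X e = u \<or> ttgt X e = u"
  shows "(u, other_end X e u) \<notin> (undir_adj (del_edge X e))\<^sup>*"
proof
  assume "(u, other_end X e u) \<in> (undir_adj (del_edge X e))\<^sup>*"
  then have "(tsrc X e, ttgt X e) \<in> (undir_adj (del_edge X e))\<^sup>*"
    using assms(3) undir_adj_sym unfolding other_end_def by (cases "tsrc X e = u") auto
  then show False
    using assms(1,2) unfolding forest_def by blast
qed

lemma distinct_walk_joining_edge:
  assumes walk: "uwalk X a p b" and dist: "distinct (walk_verts X a p)"
    and e: "e \<in> set p" "{tsrc X e, ttgt X e} = {a, b}"
  shows "p = [e]"
proof -
  obtain j where j: "j < length p" "p ! j = e"
    using e(1) by (auto simp: in_set_conv_nth)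
  have "{a, b} = {walk_verts X a p ! j, walk_verts X a p ! Suc j}"
    using uwalk_edge_ends[OF walk j(1)] j(2) e(2) by simp
  moreover have "walk_verts X a p ! 0 = a" "walk_verts X a p ! length p = b"
    using walk_verts_first walk_verts_last[OF walk] by simp_all
  ultimately have "walk_verts X a p ! j = walk_verts X a p ! 0 \<and>
      walk_verts X a p ! Suc j = walk_verts X a p ! length p \<or>
      walk_verts X a p ! Suc j = walk_verts X a p ! 0"
    by (auto simp: doubleton_eq_iff)
  then have "j = 0" "length p = 1"
    using nth_eq_iff_index_eq[OF dist] j(1) by auto
  then show ?thesis
    using j(2) by (cases p) auto
qed

text \<open>A reduced walk leaving \<open>u\<close> along \<open>e\<close> cannot come back to \<open>u\<close>: either it returns along \<open>e\<close>
  itself, or it joins the ends of \<open>e\<close> in the forest with \<open>e\<close> removed.\<close>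
lemma reduced_walk_no_return:
  assumes forest: "forest X" and e: "e \<in> tedges X" "tsrc X e = u \<or> ttgt X e = u"
    and walk: "uwalk X (other_end X e u) es w" "reduced {e} es"
    and dist: "distinct (walk_verts X (other_end X e u) es)"
  shows "u \<notin> set (walk_verts X (other_end X e u) es)"
proof
  assume "u \<in> set (walk_verts X (other_end X e u) es)"
  then obtain k where k: "k \<le> length es" "walk_verts X (other_end X e u) es ! k = u"
    by (metis in_set_conv_nth length_walk_verts less_Suc_eq_le)
  define p where "p = take k es"
  have wp: "uwalk X (other_end X e u) p u"
    using uwalk_take[OF walk(1) k(1)] k(2) unfolding p_def by simp
  show False
  proof (cases "e \<in> set p")
    case True
    have "distinct (walk_verts X (other_end X e u) p)"
      using dist walk_verts_take[OF k(1)] unfolding p_def by (metis distinct_take)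
    then have "take k es = [e]"
      using distinct_walk_joining_edge[OF wp _ True] other_end_ends[OF e(2)] unfolding p_def
      by (simp add: insert_commute)
    then show False
      using walk(2) by (cases es; cases k) auto
  next
    case False
    have "(u, other_end X e u) \<in> (undir_adj (del_edge X e))\<^sup>*"
      by (rule undir_adj_sym[OF uwalk_connects[OF wp False]])
    then show False
      using forest_edge_not_connected[OF forest e] by contradiction
  qed
qed

lemma reduced_walk_distinct_verts:
  assumes "forest X"
  shows "uwalk X u es w \<Longrightarrow> reduced P es \<Longrightarrow> distinct (walk_verts X u es)"
proof (induction es arbitrary: u P)
  case (Cons e es)
  then have "e \<in> tedges X" "tsrc X e = u \<or> ttgt X e = u" "uwalk X (other_end X e u) es w" "reduced {e} es"
    by auto
  then show ?case
    using reduced_walk_no_return[OF assms] Cons.IH by simp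
qed simp

lemma reduced_closed_walk_Nil:
  assumes "forest X" "uwalk X u es u" "reduced P es"
  shows "es = []"
proof -
  have "walk_verts X u es ! length es = walk_verts X u es ! 0"
    using walk_verts_last[OF assms(2)] walk_verts_first[of X u es] by simp
  then show ?thesis
    using nth_eq_iff_index_eq[OF reduced_walk_distinct_verts[OF assms]] by simp
qed

text \<open>Two reduced walks with the same ends leave by the same edge \<open>e\<close>: otherwise both ends of \<open>e\<close>
  would be connected to \<open>w\<close> without using \<open>e\<close>.\<close>
lemma reduced_walks_first_edge_eq:
  assumes forest: "forest X" and p: "uwalk X u (e # p) w" "reduced {} (e # p)"
    and q: "uwalk X u (f # q) w" "reduced {} (f # q)"
  shows "e = f"
proof (rule ccontr)
  assume "e \<noteq> f"
  have e: "e \<in> tedges X" "tsrc X e = u \<or> ttgt X e = u"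
    using p by auto
  have "u \<notin> set (walk_verts X (other_end X e u) p)"
    using reduced_walk_distinct_verts[OF forest p] by simp
  then have "e \<notin> set p"
    using p uwalk_edge_ends_in_verts[of X _ p w e u] e(2) by auto
  then have "(other_end X e u, w) \<in> (undir_adj (del_edge X e))\<^sup>*"
    using uwalk_connects[of X "other_end X e u" p w e] p by simp
  moreover have "u \<notin> set (walk_verts X (other_end X f u) q)"
    using reduced_walk_distinct_verts[OF forest q] by simp
  then have "e \<notin> set (f # q)"
    using q uwalk_edge_ends_in_verts[of X _ q w e u] e(2) \<open>e \<noteq> f\<close> by auto
  then have "(u, w) \<in> (undir_adj (del_edge X e))\<^sup>*"
    using uwalk_connects[of X u "f # q" w e] q by simp
  ultimately have "(u, other_end X e u) \<in> (undir_adj (del_edge X e))\<^sup>*"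
    using undir_adj_sym by (metis rtrancl_trans)
  then show False
    using forest_edge_not_connected[OF forest e] by contradiction
qed

lemma reduced_walk_unique:
  assumes "forest X"
  shows "uwalk X u p w \<Longrightarrow> uwalk X u q w \<Longrightarrow> reduced {} p \<Longrightarrow> reduced {} q \<Longrightarrow> p = q"
proof (induction p arbitrary: u q)
  case Nil
  then show ?case
    using reduced_closed_walk_Nil[OF assms, of w q] by auto
next
  case (Cons e p')
  show ?case
  proof (cases q)
    case Nil
    then show ?thesis
      using Cons.prems reduced_closed_walk_Nil[OF assms, of u "e # p'" "{}"] by simp
  next
    case (Cons f q')
    then have "e = f"
      using reduced_walks_first_edge_eq[OF assms] \<open>uwalk X u (e # p') w\<close> \<open>reduced {} (e # p')\<close>
        Cons.prems by simp
    then show ?thesis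
      using Cons.IH[of "other_end X e u" q'] Cons.prems \<open>q = f # q'\<close> by (auto intro: reduced_empty)
  qed
qed

section \<open>Trees and trunks\<close>

lemma dpath_uwalk: "is_dpath X u es w \<Longrightarrow> uwalk X u es w"
  by (induction es arbitrary: u) (auto simp: other_end_def)

lemma walk_verts_dpath: "is_dpath X u es w \<Longrightarrow> walk_verts X u es = u # map (ttgt X) es"
  by (induction es arbitrary: u) (auto simp: other_end_def)

lemma dpath_reduced: "loop_free X \<Longrightarrow> is_dpath X u es w \<Longrightarrow> reduced {} es"
proof (induction es arbitrary: u)
  case (Cons e es)
  then show ?case
    by (cases es) (auto simp: loop_free_def)
qed simp

lemma dpath_append: "is_dpath X u (xs @ ys) w \<longleftrightarrow> (\<exists>m. is_dpath X u xs m \<and> is_dpath X m ys w)"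
  by (induction xs arbitrary: u) auto

lemma dpath_nth:
  "is_dpath X u es w \<Longrightarrow> i < length es \<Longrightarrow>
   es ! i \<in> tedges X \<and> tsrc X (es ! i) = (u # map (ttgt X) es) ! i"
proof (induction es arbitrary: u i)
  case (Cons e es)
  then show ?case by (cases i) auto
qed simp

lemma dpath_take:
  "is_dpath X u es w \<Longrightarrow> i \<le> length es \<Longrightarrow> is_dpath X u (take i es) ((u # map (ttgt X) es) ! i)"
proof (induction es arbitrary: u i)
  case (Cons e es)
  then show ?case by (cases i) auto
qed simp

lemma dpath_drop:
  "is_dpath X u es w \<Longrightarrow> i \<le> length es \<Longrightarrow> is_dpath X ((u # map (ttgt X) es) ! i) (drop i es) w"
proof (induction es arbitrary: u i)
  case (Cons e es)
  then show ?case by (cases i) auto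
qed simp

lemma dpath_unique: "forest X \<Longrightarrow> is_dpath X u es w \<Longrightarrow> is_dpath X u es' w \<Longrightarrow> es = es'"
  using reduced_walk_unique dpath_uwalk dpath_reduced forest_loop_free by metis

lemma trunk_eqI: "forest X \<Longrightarrow> is_dpath X (tstart X) es (tend X) \<Longrightarrow> trunk X = es"
  unfolding trunk_def using dpath_unique by (metis (no_types, lifting) the_equality)

lemma rtrancl_least_pred:
  assumes "(a, w) \<in> r\<^sup>*" "w \<noteq> a"
  shows "\<exists>w'. (w', w) \<in> r \<and> Suc (LEAST k. (a, w') \<in> r ^^ k) = (LEAST k. (a, w) \<in> r ^^ k)"
proof -
  define d where "d x = (LEAST k. (a, x) \<in> r ^^ k)" for x
  have "\<exists>k. (a, w) \<in> r ^^ k"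
    using assms(1) by (simp add: rtrancl_power)
  then have w: "(a, w) \<in> r ^^ d w"
    unfolding d_def by (rule LeastI_ex)
  then obtain k where k: "d w = Suc k"
    using assms(2) by (cases "d w") auto
  then obtain w' where w': "(a, w') \<in> r ^^ k" "(w', w) \<in> r"
    using w by (auto elim: relpow_Suc_E)
  have "d w' \<le> k"
    unfolding d_def using w'(1) by (rule Least_le)
  moreover have "(a, w) \<in> r ^^ Suc (d w')"
    using LeastI[of "\<lambda>k. (a, w') \<in> r ^^ k", OF w'(1)] w'(2) unfolding d_def by auto
  then have "d w \<le> Suc (d w')"
    unfolding d_def by (rule Least_le)
  ultimately show ?thesis
    using k w'(2) unfolding d_def by (intro exI[of _ w']) auto
qed

text \<open>Each vertex other than \<open>v0\<close> is sent to the edge towards a vertex closer to \<open>v0\<close>;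
  this map is injective.\<close>
lemma connected_card_verts_le:
  assumes finE: "finite (tedges X)" and finV: "finite (tverts X)" and v0: "v0 \<in> tverts X"
    and conn: "\<forall>w\<in>tverts X. (v0, w) \<in> (undir_adj X)\<^sup>*"
  shows "card (tverts X) \<le> Suc (card (tedges X))"
proof -
  define d where "d x = (LEAST k. (v0, x) \<in> undir_adj X ^^ k)" for x
  define parent_edge where "parent_edge w e \<longleftrightarrow> e \<in> tedges X \<and> (\<exists>w'. Suc (d w') = d w \<and>
      (tsrc X e = w' \<and> ttgt X e = w \<or> tsrc X e = w \<and> ttgt X e = w'))" for w e
  have "\<exists>e. parent_edge w e" if "w \<in> tverts X - {v0}" for w
    using rtrancl_least_pred[of v0 w "undir_adj X"] conn that undir_adjE
    unfolding parent_edge_def d_def by fastforce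
  then obtain h where h: "\<And>w. w \<in> tverts X - {v0} \<Longrightarrow> parent_edge w (h w)"
    by metis
  have "inj_on h (tverts X - {v0})"
  proof (rule inj_onI)
    fix w1 w2
    assume "w1 \<in> tverts X - {v0}" "w2 \<in> tverts X - {v0}" "h w1 = h w2"
    then obtain a b where "Suc (d a) = d w1" "Suc (d b) = d w2" "{a, w1} = {b, w2}"
      using h unfolding parent_edge_def by (metis insert_commute)
    then show "w1 = w2"
      by (auto simp: doubleton_eq_iff)
  qed
  moreover have "h ` (tverts X - {v0}) \<subseteq> tedges X"
    using h unfolding parent_edge_def by blast
  ultimately have "card (tverts X - {v0}) \<le> card (tedges X)"
    using finE by (rule card_inj_on_le)
  then show ?thesis
    using finV v0 by (simp add: card_Diff_singleton_if)
qed

lemma tree_forest: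
  assumes t: "is_tree X"
  shows "forest X"
  unfolding forest_def
proof (intro ballI notI)
  fix e
  assume e: "e \<in> tedges X" and loop: "(tsrc X e, ttgt X e) \<in> (undir_adj (del_edge X e))\<^sup>*"
  text \<open>Removing an edge whose ends stay connected leaves the graph connected, violating the edge count.\<close>
  have "undir_adj X \<subseteq> (undir_adj (del_edge X e))\<^sup>*"
  proof
    fix p
    assume "p \<in> undir_adj X"
    then obtain f where "f \<in> tedges X" "p = (tsrc X f, ttgt X f) \<or> p = (ttgt X f, tsrc X f)"
      unfolding undir_adj_def by blast
    then show "p \<in> (undir_adj (del_edge X e))\<^sup>*"
      using loop undir_adj_sym[OF loop] undir_adjI[of f "del_edge X e"]
      by (cases "f = e") (auto simp: del_edge_def)
  qed
  then have "(undir_adj X)\<^sup>* \<subseteq> (undir_adj (del_edge X e))\<^sup>*"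
    by (rule rtrancl_subset_rtrancl)
  then have "card (tverts X) \<le> Suc (card (tedges X - {e}))"
    using t connected_card_verts_le[of "del_edge X e" "tstart X"]
    unfolding is_tree_def del_edge_def by auto
  moreover have "card (tedges X) > 0"
    using t e card_gt_0_iff unfolding is_tree_def by blast
  ultimately show False
    using t e unfolding is_tree_def by (simp add: card_Diff_singleton_if)
qed

text \<open>A relaxation of \<open>is_tree\<close> that is visibly inherited by retracts: acyclicity is explicit
  and the edge count only needs to bound the vertex count.\<close>
definition weak_tree :: "('v, 'e, 's) stree \<Rightarrow> bool" where
  "weak_tree X \<longleftrightarrow> finite (tverts X) \<and> finite (tedges X) \<and>
     (\<forall>e\<in>tedges X. tsrc X e \<in> tverts X \<and> ttgt X e \<in> tverts X) \<and>
     tstart X \<in> tverts X \<and> tend X \<in> tverts X \<and> forest X \<and>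
     card (tverts X) \<le> Suc (card (tedges X)) \<and> (\<exists>es. is_dpath X (tstart X) es (tend X)) \<and>
     (\<forall>w\<in>tverts X. (tstart X, w) \<in> (undir_adj X)\<^sup>*)"

lemma tree_weak_tree: "is_tree X \<Longrightarrow> weak_tree X"
  using tree_forest unfolding weak_tree_def is_tree_def by auto

section \<open>Depth and locality of \<open>tauF\<close>\<close>

lemma tauF_eq_if_walks_shorter:
  assumes "finite (tedges X)" "\<forall>es w. uwalk X v es w \<longrightarrow> reduced P es \<longrightarrow> length es < k" "k \<le> n"
  shows "tauF chi X n v P = tauF chi X k v P"
  using assms(2,3)
proof (induction k arbitrary: v P n)
  case 0
  then show ?case
    by (metis list.size(3) not_less_zero reduced_Nil uwalk.simps(1))
next
  case (Suc k)
  then obtain n' where n: "n = Suc n'" "k \<le> n'"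
    by (cases n) auto
  have "out_factor chi X n' e = out_factor chi X k e" if "e \<in> out_edges X v P" for e
    unfolding out_factor_def
    using that Suc.prems(1)[rule_format, of "e # _"] by (subst Suc.IH[OF _ n(2)]) (auto simp: other_end_def)
  moreover have "in_factor chi X n' e = in_factor chi X k e" if "e \<in> in_edges X v P" for e
    unfolding in_factor_def
    using that Suc.prems(1)[rule_format, of "e # _"] by (subst Suc.IH[OF _ n(2)]) (auto simp: other_end_def)
  ultimately show ?case
    unfolding n tauF_Suc using assms(1) by (intro arg_cong2[where f = "(*)"] prodE_cong) auto
qed

lemma reduced_walk_length_less:
  assumes X: "weak_tree X" and walk: "u \<in> tverts X" "uwalk X u es w" "reduced P es"
  shows "length es < card (tverts X)"
proof -
  have X: "forest X" "finite (tverts X)" "\<forall>e\<in>tedges X. tsrc X e \<in> tverts X \<and> ttgt X e \<in> tverts X"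
    using X unfolding weak_tree_def by simp_all
  have "distinct (walk_verts X u es)"
    by (rule reduced_walk_distinct_verts[OF X(1) walk(2,3)])
  moreover have "set (walk_verts X u es) \<subseteq> tverts X"
    by (rule walk_verts_subset[OF walk(2,1) X(3)])
  ultimately have "length (walk_verts X u es) \<le> card (tverts X)"
    using X(2) by (metis card_mono distinct_card)
  then show ?thesis
    by simp
qed

text \<open>Beyond the length of the longest reduced walk the recursion no longer changes, so the depth
  \<open>card (tedges X) + 1\<close> used in \<open>tau\<close> and \<open>rho\<close> is large enough.\<close>
lemma tauF_stable:
  assumes "weak_tree X" "v \<in> tverts X" "Suc (card (tedges X)) \<le> m"
  shows "tauF chi X m v P = tauF chi X (Suc (card (tedges X))) v P"
proof -
  have walks: "\<forall>es w. uwalk X v es w \<longrightarrow> reduced P es \<longrightarrow> length es < card (tverts X)"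
    using reduced_walk_length_less[OF assms(1,2)] by blast
  have "card (tverts X) \<le> Suc (card (tedges X))" "finite (tedges X)"
    using assms(1) unfolding weak_tree_def by simp_all
  then show ?thesis
    using tauF_eq_if_walks_shorter[OF _ walks] assms(3) by (metis le_trans)
qed

definition walks_avoid :: "('v, 'e, 's) stree \<Rightarrow> 'v set \<Rightarrow> 'v \<Rightarrow> 'e set \<Rightarrow> bool" where
  "walks_avoid X B v P \<longleftrightarrow> (\<forall>es w. uwalk X v es w \<longrightarrow> reduced P es \<longrightarrow> w \<notin> B)"

lemma walks_avoid_step:
  assumes "walks_avoid X B v P" "e \<in> tedges X" "e \<notin> P" "tsrc X e = v \<or> ttgt X e = v"
  shows "walks_avoid X B (other_end X e v) {e}"
  unfolding walks_avoid_def
proof (intro allI impI)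
  fix es w
  assume "uwalk X (other_end X e v) es w" "reduced {e} es"
  then have "uwalk X v (e # es) w" "reduced P (e # es)"
    using assms(2-4) by simp_all
  then show "w \<notin> B"
    using assms(1) unfolding walks_avoid_def by blast
qed

definition local_embedding ::
  "('v, 'e, 's) stree \<Rightarrow> ('w, 'f, 's) stree \<Rightarrow> ('v \<Rightarrow> 'w) \<Rightarrow> ('e \<Rightarrow> 'f) \<Rightarrow> 'v set \<Rightarrow> bool" where
  "local_embedding X W gv ge B \<longleftrightarrow> edge_hom X W gv ge \<and> inj_on ge (tedges X) \<and>
     (\<forall>u\<in>tverts X - B. out_edges W (gv u) {} \<subseteq> ge ` out_edges X u {} \<and>
        in_edges W (gv u) {} \<subseteq> ge ` in_edges X u {})"

lemma local_embedding_incident_edges: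
  assumes emb: "local_embedding X W gv ge B" and u: "u \<in> tverts X - B"
    and Q: "\<forall>e\<in>tedges X. ge e \<in> Q \<longleftrightarrow> e \<in> P"
  shows "out_edges W (gv u) Q = ge ` out_edges X u P" "in_edges W (gv u) Q = ge ` in_edges X u P"
proof -
  have "out_edges W (gv u) Q \<subseteq> ge ` out_edges X u {}" "in_edges W (gv u) Q \<subseteq> ge ` in_edges X u {}"
    using emb u unfolding local_embedding_def by blast+
  then show "out_edges W (gv u) Q = ge ` out_edges X u P" "in_edges W (gv u) Q = ge ` in_edges X u P"
    using emb Q unfolding local_embedding_def edge_hom_def by (auto 4 3)
qed

context adequate_monoid
begin

text \<open>\<open>tauF\<close> is unchanged by a local embedding as long as the explored part of \<open>X\<close> does not reach
  the vertices \<open>B\<close> where the embedding may miss edges.\<close>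
lemma tauF_local_embedding:
  assumes finX: "finite (tedges X)" and emb: "local_embedding X W gv ge B"
    and ends: "\<forall>e\<in>tedges X. tsrc X e \<in> tverts X \<and> ttgt X e \<in> tverts X"
  shows "u \<in> tverts X \<Longrightarrow> walks_avoid X B u P \<Longrightarrow> (\<forall>e\<in>tedges X. ge e \<in> Q \<longleftrightarrow> e \<in> P) \<Longrightarrow>
    tauF chi W n (gv u) Q = (tauF chi X n u P :: 'm)"
proof (induction n arbitrary: u P Q)
  case (Suc n)
  have "u \<notin> B"
    using Suc.prems(2) unfolding walks_avoid_def by (metis uwalk.simps(1) reduced_Nil)
  then have edges: "out_edges W (gv u) Q = ge ` out_edges X u P" "in_edges W (gv u) Q = ge ` in_edges X u P"
    using local_embedding_incident_edges[OF emb] Suc.prems(1,3) by simp_all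
  have hom: "edge_hom X W gv ge" and inj: "inj_on ge (tedges X)"
    using emb unfolding local_embedding_def by simp_all
  have Q_single: "\<forall>e'\<in>tedges X. ge e' \<in> {ge e} \<longleftrightarrow> e' \<in> {e}" if "e \<in> tedges X" for e
    using inj that unfolding inj_on_def by blast
  have "prodE (ge ` out_edges X u P) (out_factor chi W n) = prodE (out_edges X u P) (out_factor chi X n)"
  proof (rule prodE_reindex)
    fix e
    assume e: "e \<in> out_edges X u P"
    then have "walks_avoid X B (ttgt X e) {e}"
      using walks_avoid_step[OF Suc.prems(2), of e] by (simp add: other_end_def)
    then show "out_factor chi W n (ge e) = out_factor chi X n e"
      using e Suc.IH[of "ttgt X e" "{e}" "{ge e}"] hom ends Q_single
      unfolding out_factor_def edge_hom_def by simp
  qed (use finX inj in \<open>auto intro: inj_on_subset\<close>)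
  moreover have "prodE (ge ` in_edges X u P) (in_factor chi W n) = prodE (in_edges X u P) (in_factor chi X n)"
  proof (rule prodE_reindex)
    fix e
    assume e: "e \<in> in_edges X u P"
    then have "walks_avoid X B (tsrc X e) {e}"
      using walks_avoid_step[OF Suc.prems(2), of e] by (auto simp: other_end_def)
    then show "in_factor chi W n (ge e) = in_factor chi X n e"
      using e Suc.IH[of "tsrc X e" "{e}" "{ge e}"] hom ends Q_single
      unfolding in_factor_def edge_hom_def by simp
  qed (use finX inj in \<open>auto intro: inj_on_subset\<close>)
  ultimately show ?case
    unfolding tauF_Suc edges by simp
qed simp

end

section \<open>Alternating products\<close>

text \<open>\<open>alt_prod c x i = c 0 * x 1 * c 1 * \<dots> * x i * c i\<close>, and \<open>alt_prod_from c x n i\<close> is the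
  factor \<open>c i * x (i + 1) * \<dots> * x n * c n\<close>; \<open>x\<close> is indexed from 1.\<close>
fun alt_prod :: "(nat \<Rightarrow> 'm::monoid_mult) \<Rightarrow> (nat \<Rightarrow> 'm) \<Rightarrow> nat \<Rightarrow> 'm" where
  "alt_prod c x 0 = c 0"
| "alt_prod c x (Suc i) = alt_prod c x i * (x (Suc i) * c (Suc i))"

definition alt_prod_from :: "(nat \<Rightarrow> 'm::monoid_mult) \<Rightarrow> (nat \<Rightarrow> 'm) \<Rightarrow> nat \<Rightarrow> nat \<Rightarrow> 'm" where
  "alt_prod_from c x n i = c i * prod_list (map (\<lambda>j. x j * c j) [Suc i..<Suc n])"

lemma alt_prod_from_last: "alt_prod_from c x n n = c n"
  by (simp add: alt_prod_from_def)

lemma alt_prod_from_step: "i < n \<Longrightarrow> alt_prod_from c x n i = c i * (x (Suc i) * alt_prod_from c x n (Suc i))"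
  unfolding alt_prod_from_def by (simp add: upt_conv_Cons mult.assoc del: upt_Suc)

lemma alt_prod_mult_tail:
  "i \<le> n \<Longrightarrow> alt_prod c x i * prod_list (map (\<lambda>j. x j * c j) [Suc i..<Suc n]) = alt_prod c x n"
proof (induction n)
  case (Suc n)
  show ?case
  proof (cases "i = Suc n")
    case False
    then have "i \<le> n" "[Suc i..<Suc (Suc n)] = [Suc i..<Suc n] @ [Suc n]"
      using Suc.prems by simp_all
    then show ?thesis
      using Suc.IH by (simp add: mult.assoc[symmetric])
  qed simp
qed simp

lemma alt_prod_eq_from: "alt_prod c x n = alt_prod_from c x n 0"
  using alt_prod_mult_tail[of 0 n c x] by (simp add: alt_prod_from_def)

lemma alt_prod_cong: "(\<And>i. i \<le> n \<Longrightarrow> c i = c' i) \<Longrightarrow> alt_prod c x n = alt_prod c' x n"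
  by (induction n) auto

lemma alt_prod_append:
  assumes "\<And>i. i < a \<Longrightarrow> c i = c1 i" "c a = c1 a * c2 0"
    and "\<And>j. 0 < j \<Longrightarrow> j \<le> b \<Longrightarrow> c (a + j) = c2 j"
    and "\<And>i. 0 < i \<Longrightarrow> i \<le> a \<Longrightarrow> x i = x1 i"
    and "\<And>j. 0 < j \<Longrightarrow> j \<le> b \<Longrightarrow> x (a + j) = x2 j"
  shows "alt_prod c x (a + b) = alt_prod c1 x1 a * alt_prod c2 x2 b"
proof -
  have "i < a \<Longrightarrow> alt_prod c x i = alt_prod c1 x1 i" for i
    by (induction i) (simp_all add: assms(1,4))
  then have "alt_prod c x a = alt_prod c1 x1 a * c2 0"
    using assms(2,4) by (cases a) (simp_all add: mult.assoc)
  then have "j \<le> b \<Longrightarrow> alt_prod c x (a + j) = alt_prod c1 x1 a * alt_prod c2 x2 j" for j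
  proof (induction j)
    case (Suc j)
    then have "c (Suc (a + j)) = c2 (Suc j)" "x (Suc (a + j)) = x2 (Suc j)"
      using assms(3,5)[of "Suc j"] by simp_all
    then show ?case
      using Suc by (simp add: mult.assoc)
  qed simp
  then show ?thesis
    by simp
qed

context adequate_monoid
begin

lemma alt_prod_idem_last: "(\<And>j. idem (c j)) \<Longrightarrow> alt_prod c x i * c i = (alt_prod c x i :: 'm)"
  by (cases i) (simp_all add: idem_def mult.assoc)

lemma astar_alt_prod_recursion:
  assumes "\<And>j. idem (c j)" "L 0 = c 0" "\<And>i. i < n \<Longrightarrow> L (Suc i) = c (Suc i) * astar (L i * x (Suc i))"
  shows "i \<le> n \<Longrightarrow> L i = astar (alt_prod c x i :: 'm)"
proof (induction i)
  case 0
  then show ?case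
    using assms(1,2) by (simp add: astar_idem)
next
  case (Suc i)
  then have "L (Suc i) = c (Suc i) * astar (alt_prod c x i * x (Suc i))"
    using assms(3) by (simp add: astar_astar_mult)
  also have "\<dots> = astar (alt_prod c x i * x (Suc i)) * c (Suc i)"
    using idem_commute[OF assms(1) idem_astar] by simp
  also have "\<dots> = astar (alt_prod c x i * x (Suc i) * c (Suc i))"
    using assms(1) by (simp add: astar_mult_idem)
  finally show ?case
    by (simp add: mult.assoc)
qed

lemma aplus_alt_prod_from_recursion:
  assumes "\<And>j. idem (c j)" "R n = c n" "\<And>i. i < n \<Longrightarrow> R i = c i * aplus (x (Suc i) * R (Suc i))"
  shows "i \<le> n \<Longrightarrow> R i = aplus (alt_prod_from c x n i :: 'm)"
proof (induction i rule: inc_induct)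
  case base
  then show ?case
    using assms(1,2) by (simp add: alt_prod_from_last aplus_idem)
next
  case (step i)
  then have "R i = c i * aplus (x (Suc i) * alt_prod_from c x n (Suc i))"
    using assms(3) by (simp add: aplus_mult_aplus)
  then show ?case
    using assms(1) alt_prod_from_step[OF step(2), of c x] by (simp add: aplus_idem_mult)
qed

lemma idem_mult_aplus_alt_prod_from:
  assumes "\<And>j. idem (c j)"
  shows "c i * aplus (alt_prod_from c x n i) = (aplus (alt_prod_from c x n i) :: 'm)"
proof -
  have "c i * aplus (alt_prod_from c x n i) = (c i * c i) * aplus (prod_list (map (\<lambda>j. x j * c j) [Suc i..<Suc n]))"
    unfolding alt_prod_from_def using assms by (simp add: aplus_idem_mult mult.assoc)
  then show ?thesis
    using assms unfolding alt_prod_from_def by (simp add: aplus_idem_mult idem_def)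
qed

text \<open>The algebraic heart of the trunk decomposition: with
  \<open>W i = (alt_prod c x i)\<^sup>* (alt_prod_from c x n i)\<^sup>+\<close>, the alternating product of the \<open>W i\<close>
  equals that of the \<open>c i\<close>.\<close>
lemma alt_prod_astar_aplus:
  assumes c: "\<And>j. idem (c j)" and W: "\<And>i. i \<le> n \<Longrightarrow> W i = astar (alt_prod c x i) * aplus (alt_prod_from c x n i)"
  shows "i \<le> n \<Longrightarrow> alt_prod W x i = alt_prod c x i * (aplus (alt_prod_from c x n i) :: 'm)"
proof (induction i)
  case 0
  then show ?case
    using W c by (simp add: astar_idem)
next
  case (Suc i)
  define p where "p = alt_prod c x (Suc i)"
  define s where "s = alt_prod_from c x n (Suc i)"
  define y where "y = x (Suc i)"
  have "alt_prod W x (Suc i) = alt_prod c x i * aplus (alt_prod_from c x n i) * (y * (astar p * aplus s))"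
    using Suc W[OF Suc.prems] unfolding p_def s_def y_def by simp
  also have "aplus (alt_prod_from c x n i) = c i * aplus (y * s)"
    using alt_prod_from_step[of i n c x] Suc.prems c unfolding s_def y_def by (simp add: aplus_idem_mult)
  also have "alt_prod c x i * (c i * aplus (y * s)) = alt_prod c x i * aplus (y * s)"
    using alt_prod_idem_last[of c, OF c] by (simp flip: mult.assoc)
  also have "alt_prod c x i * aplus (y * s) * (y * (astar p * aplus s)) =
      alt_prod c x i * (aplus (y * s) * (y * aplus s)) * astar p"
    using idem_commute[of "astar p" "aplus s"] by (simp add: mult.assoc)
  also have "aplus (y * s) * (y * aplus s) = y * (c (Suc i) * aplus s)"
    using aplus_absorb[of "y * aplus s"] idem_mult_aplus_alt_prod_from[where c = c and i = "Suc i", OF c]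
    by (simp add: aplus_mult_aplus s_def)
  also have "alt_prod c x i * (y * (c (Suc i) * aplus s)) * astar p = p * astar p * aplus s"
    using idem_commute[of "aplus s" "astar p"] by (simp add: p_def y_def mult.assoc)
  finally show ?case
    by (simp add: astar_absorb p_def s_def)
qed

end

section \<open>The trunk decomposition of \<open>rho\<close>\<close>

locale trunk_decomposition = adequate_monoid +
  fixes chi :: "'s \<Rightarrow> 'm::monoid_mult" and X :: "('v, 'e, 's) stree"
  assumes weak_tree: "weak_tree X"
begin

definition len :: nat where
  "len = length (trunk X)"

definition vtx :: "nat \<Rightarrow> 'v" where
  "vtx i = (tstart X # map (ttgt X) (trunk X)) ! i"

definition depth :: nat where
  "depth = Suc (card (tedges X))"

definition tau_at :: "'v \<Rightarrow> 'e set \<Rightarrow> 'm" where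
  "tau_at v P = tauF chi X depth v P"

definition trunk_edges :: "nat set \<Rightarrow> 'e set" where
  "trunk_edges I = (!) (trunk X) ` I"

text \<open>Values at the trunk vertex \<open>vtx i\<close> with all trunk edges removed (the paper's
  \<open>\<tau>(X\<^sub>i)\<close>), with those before \<open>vtx i\<close> removed, with those after it removed, and with none removed.\<close>
definition tau_comp :: "nat \<Rightarrow> 'm" where
  "tau_comp i = tau_at (vtx i) (trunk_edges {..<len})"

definition tau_right :: "nat \<Rightarrow> 'm" where
  "tau_right i = tau_at (vtx i) (trunk_edges {..<i})"

definition tau_left :: "nat \<Rightarrow> 'm" where
  "tau_left i = tau_at (vtx i) (trunk_edges {i..<len})"

definition tau_whole :: "nat \<Rightarrow> 'm" where
  "tau_whole i = tau_at (vtx i) {}"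

definition trunk_lab :: "nat \<Rightarrow> 'm" where
  "trunk_lab j = chi (tlab X (trunk X ! (j - 1)))"

lemma finite_edges: "finite (tedges X)"
  and ends_in_verts: "\<forall>e\<in>tedges X. tsrc X e \<in> tverts X \<and> ttgt X e \<in> tverts X"
  and start_in_verts: "tstart X \<in> tverts X" and forest: "forest X"
  using weak_tree unfolding weak_tree_def by auto

lemma trunk_dpath: "is_dpath X (tstart X) (trunk X) (tend X)"
proof -
  obtain es where "is_dpath X (tstart X) es (tend X)"
    using weak_tree unfolding weak_tree_def by blast
  then show ?thesis
    using trunk_eqI[OF forest] by simp
qed

lemma distinct_trunk_verts: "distinct (tstart X # map (ttgt X) (trunk X))"
  using reduced_walk_distinct_verts[OF forest dpath_uwalk[OF trunk_dpath]]
    dpath_reduced[OF forest_loop_free[OF forest] trunk_dpath] walk_verts_dpath[OF trunk_dpath]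
  by simp

lemma distinct_trunk: "distinct (trunk X)"
  using distinct_trunk_verts by (simp add: distinct_map)

lemma trunk_nth:
  "k < len \<Longrightarrow> trunk X ! k \<in> tedges X \<and> tsrc X (trunk X ! k) = vtx k \<and> ttgt X (trunk X ! k) = vtx (Suc k)"
  using dpath_nth[OF trunk_dpath, of k] unfolding vtx_def len_def by simp

lemma vtx_inj: "i \<le> len \<Longrightarrow> j \<le> len \<Longrightarrow> vtx i = vtx j \<Longrightarrow> i = j"
  using nth_eq_iff_index_eq[OF distinct_trunk_verts, of i j] unfolding vtx_def len_def by simp

lemma vtx_in_verts: "i \<le> len \<Longrightarrow> vtx i \<in> tverts X"
  using start_in_verts ends_in_verts trunk_nth[of "i - 1"] by (cases i) (auto simp: vtx_def)

lemma vtx_0: "vtx 0 = tstart X"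
  by (simp add: vtx_def)

lemma vtx_len: "vtx len = tend X"
  using walk_verts_last[OF dpath_uwalk[OF trunk_dpath]] walk_verts_dpath[OF trunk_dpath]
  unfolding vtx_def len_def by simp

lemma trunk_edges_all: "trunk_edges {..<len} = set (trunk X)"
  by (auto simp: trunk_edges_def len_def in_set_conv_nth)

lemma tauF_eq_tau_at: "v \<in> tverts X \<Longrightarrow> depth \<le> m \<Longrightarrow> tauF chi X m v P = tau_at v P"
  using tauF_stable[OF weak_tree] unfolding tau_at_def depth_def by blast

lemma tau_comp_eq_tauF: "i \<le> len \<Longrightarrow> depth \<le> m \<Longrightarrow> tau_comp i = tauF chi X m (vtx i) (set (trunk X))"
  unfolding tau_comp_def trunk_edges_all using tauF_eq_tau_at vtx_in_verts by simp

lemma idem_tau_at [simp]: "idem (tau_at v P)"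
  by (simp add: tau_at_def)

lemma trunk_edge_at_vtx:
  assumes "j \<le> len" "k < len"
  shows "tsrc X (trunk X ! k) = vtx j \<Longrightarrow> k = j" and "ttgt X (trunk X ! k) = vtx j \<Longrightarrow> Suc k = j"
  using trunk_nth[OF assms(2)] vtx_inj[of k j] vtx_inj[of "Suc k" j] assms by auto

lemma nth_in_trunk_edges: "k < len \<Longrightarrow> I \<subseteq> {..<len} \<Longrightarrow> trunk X ! k \<in> trunk_edges I \<longleftrightarrow> k \<in> I"
  using nth_eq_iff_index_eq[OF distinct_trunk] unfolding trunk_edges_def len_def by auto

text \<open>Only the two trunk edges at \<open>vtx j\<close> matter.\<close>
lemma tauF_trunk_edges_cong:
  assumes j: "j \<le> len" and I: "I \<subseteq> {..<len}" "I' \<subseteq> {..<len}"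
    and next_edge: "j < len \<Longrightarrow> j \<in> I \<longleftrightarrow> j \<in> I'"
    and prev_edge: "0 < j \<Longrightarrow> j - 1 \<in> I \<longleftrightarrow> j - 1 \<in> I'"
  shows "tauF chi X m (vtx j) (trunk_edges I) = tauF chi X m (vtx j) (trunk_edges I')"
proof (rule tauF_cong_incident)
  fix e
  assume e: "e \<in> tedges X" "tsrc X e = vtx j \<or> ttgt X e = vtx j"
  show "e \<in> trunk_edges I \<longleftrightarrow> e \<in> trunk_edges I'"
  proof (cases "e \<in> set (trunk X)")
    case True
    then obtain k where k: "k < len" "e = trunk X ! k"
      by (auto simp: in_set_conv_nth len_def)
    then have "k = j \<or> Suc k = j"
      using trunk_edge_at_vtx[OF j k(1)] e by auto
    moreover have "e \<in> trunk_edges I \<longleftrightarrow> k \<in> I" "e \<in> trunk_edges I' \<longleftrightarrow> k \<in> I'"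
      using nth_in_trunk_edges[OF k(1)] I k(2) by simp_all
    ultimately show ?thesis
      using next_edge prev_edge k(1) by fastforce
  next
    case False
    have "trunk_edges I \<subseteq> set (trunk X)" "trunk_edges I' \<subseteq> set (trunk X)"
      using I by (auto simp: trunk_edges_def len_def)
    then show ?thesis
      using False by blast
  qed
qed

lemma tau_at_trunk_edges_cong:
  "j \<le> len \<Longrightarrow> I \<subseteq> {..<len} \<Longrightarrow> I' \<subseteq> {..<len} \<Longrightarrow> (j < len \<Longrightarrow> j \<in> I \<longleftrightarrow> j \<in> I') \<Longrightarrow>
   (0 < j \<Longrightarrow> j - 1 \<in> I \<longleftrightarrow> j - 1 \<in> I') \<Longrightarrow> tau_at (vtx j) (trunk_edges I) = tau_at (vtx j) (trunk_edges I')"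
  unfolding tau_at_def by (rule tauF_trunk_edges_cong)

lemma tau_at_split_next:
  assumes i: "i < len" and I: "I \<subseteq> {..<len}" "i \<notin> I"
  shows "tau_at (vtx i) (trunk_edges I) =
    aplus (trunk_lab (Suc i) * tau_right (Suc i)) * tau_at (vtx i) (trunk_edges (insert i I))"
proof -
  define g where "g = trunk X ! i"
  have g: "g \<in> tedges X" "tsrc X g = vtx i" "ttgt X g = vtx (Suc i)" "g \<notin> trunk_edges I"
    using trunk_nth[OF i] nth_in_trunk_edges[OF i I(1)] I(2) unfolding g_def by auto
  have no_loop: "ttgt X g \<noteq> vtx i"
    using g forest_loop_free[OF forest] unfolding loop_free_def by auto
  have "tau_at (vtx (Suc i)) (trunk_edges {i}) = tau_at (vtx (Suc i)) (trunk_edges {..<Suc i})"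
    using i by (intro tau_at_trunk_edges_cong) auto
  then have "tauF chi X depth (vtx (Suc i)) (trunk_edges {i}) = tau_right (Suc i)"
    by (simp add: tau_right_def tau_at_def)
  then have "out_factor chi X depth g = aplus (trunk_lab (Suc i) * tau_right (Suc i))"
    using g(3) by (simp add: out_factor_def trunk_lab_def g_def trunk_edges_def)
  moreover have "insert g (trunk_edges I) = trunk_edges (insert i I)"
    by (simp add: g_def trunk_edges_def)
  ultimately show ?thesis
    using tauF_split_out[OF finite_edges g(1,2,4) no_loop, of chi depth] vtx_in_verts i
    by (simp add: tauF_eq_tau_at)
qed

lemma tau_at_split_prev:
  assumes i: "i < len" and I: "I \<subseteq> {..<len}" "i \<notin> I"
  shows "tau_at (vtx (Suc i)) (trunk_edges I) =
    astar (tau_left i * trunk_lab (Suc i)) * tau_at (vtx (Suc i)) (trunk_edges (insert i I))"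
proof -
  define g where "g = trunk X ! i"
  have g: "g \<in> tedges X" "tsrc X g = vtx i" "ttgt X g = vtx (Suc i)" "g \<notin> trunk_edges I"
    using trunk_nth[OF i] nth_in_trunk_edges[OF i I(1)] I(2) unfolding g_def by auto
  have no_loop: "tsrc X g \<noteq> vtx (Suc i)"
    using g forest_loop_free[OF forest] unfolding loop_free_def by auto
  have "tau_at (vtx i) (trunk_edges {i}) = tau_at (vtx i) (trunk_edges {i..<len})"
    using i by (intro tau_at_trunk_edges_cong) auto
  then have "tauF chi X depth (vtx i) (trunk_edges {i}) = tau_left i"
    by (simp add: tau_left_def tau_at_def)
  then have "in_factor chi X depth g = astar (tau_left i * trunk_lab (Suc i))"
    using g(2) by (simp add: in_factor_def trunk_lab_def g_def trunk_edges_def)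
  moreover have "insert g (trunk_edges I) = trunk_edges (insert i I)"
    by (simp add: g_def trunk_edges_def)
  ultimately show ?thesis
    using tauF_split_in[OF finite_edges g(1,3,4) no_loop, of chi depth] vtx_in_verts i
    by (simp add: tauF_eq_tau_at)
qed

lemma tau_left_0: "tau_left 0 = tau_comp 0"
  unfolding tau_left_def tau_comp_def by (simp add: atLeast0LessThan)

lemma tau_right_len: "tau_right len = tau_comp len"
  unfolding tau_right_def tau_comp_def ..

lemma idem_tau_comp: "idem (tau_comp i)"
  by (simp add: tau_comp_def)

lemma tau_right_Suc:
  assumes i: "i < len"
  shows "tau_right i = tau_comp i * aplus (trunk_lab (Suc i) * tau_right (Suc i))"
proof -
  have "tau_right i = aplus (trunk_lab (Suc i) * tau_right (Suc i)) * tau_at (vtx i) (trunk_edges {..<Suc i})"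
    using tau_at_split_next[OF i, of "{..<i}"] i by (simp add: tau_right_def lessThan_Suc)
  also have "tau_at (vtx i) (trunk_edges {..<Suc i}) = tau_comp i"
    unfolding tau_comp_def using i by (intro tau_at_trunk_edges_cong) auto
  finally show ?thesis
    using idem_commute[OF idem_aplus idem_tau_comp] by simp
qed

lemma tau_left_Suc:
  assumes i: "i < len"
  shows "tau_left (Suc i) = tau_comp (Suc i) * astar (tau_left i * trunk_lab (Suc i))"
proof -
  have "{i..<len} = insert i {Suc i..<len}"
    using i by auto
  then have "tau_left (Suc i) = astar (tau_left i * trunk_lab (Suc i)) * tau_at (vtx (Suc i)) (trunk_edges {i..<len})"
    using tau_at_split_prev[OF i, of "{Suc i..<len}"] by (simp add: tau_left_def subset_eq)
  also have "tau_at (vtx (Suc i)) (trunk_edges {i..<len}) = tau_comp (Suc i)"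
    unfolding tau_comp_def using i by (intro tau_at_trunk_edges_cong) auto
  finally show ?thesis
    using idem_commute[OF idem_astar idem_tau_comp] by simp
qed

lemma tau_left_mult_comp: "i \<le> len \<Longrightarrow> tau_left i * tau_comp i = tau_left i"
proof (cases i)
  case 0
  then show ?thesis
    using tau_left_0 idem_tau_comp by (simp add: idem_def)
next
  case (Suc k)
  moreover assume "i \<le> len"
  ultimately show ?thesis
    using tau_left_Suc[of k] idem_tau_comp[of i] idem_commute[OF idem_astar idem_tau_comp]
    by (simp add: idem_def mult.assoc) (metis mult.assoc)
qed

lemma tau_whole_eq: "i \<le> len \<Longrightarrow> tau_whole i = tau_left i * tau_right i"
proof (cases "i = len")
  case True
  then show ?thesis
    using tau_left_mult_comp[of len] tau_right_len unfolding tau_whole_def tau_left_def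
    by (simp add: trunk_edges_def)
next
  case False
  moreover assume "i \<le> len"
  ultimately have i: "i < len"
    by simp
  have "tau_whole i = aplus (trunk_lab (Suc i) * tau_right (Suc i)) * tau_at (vtx i) (trunk_edges {i})"
    using tau_at_split_next[OF i, of "{}"] by (simp add: tau_whole_def trunk_edges_def)
  also have "tau_at (vtx i) (trunk_edges {i}) = tau_left i"
    unfolding tau_left_def using i by (intro tau_at_trunk_edges_cong) auto
  also have "aplus (trunk_lab (Suc i) * tau_right (Suc i)) * tau_left i =
      tau_left i * tau_comp i * aplus (trunk_lab (Suc i) * tau_right (Suc i))"
    using idem_commute[OF idem_aplus, of "tau_left i"] tau_left_mult_comp[of i] i
    unfolding tau_left_def by simp
  also have "\<dots> = tau_left i * tau_right i"
    using tau_right_Suc[OF i] by (simp add: mult.assoc)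
  finally show ?thesis .
qed

lemma rho_eq_alt_prod: "rho chi X = alt_prod tau_comp trunk_lab len"
proof -
  have comp: "tau_comp j = tau_at (vtx j) (set (trunk X))" for j
    unfolding tau_comp_def trunk_edges_all ..
  have "map (\<lambda>e. chi (tlab X e) * tau_at (ttgt X e) (set (trunk X))) (trunk X) =
      map (\<lambda>j. trunk_lab j * tau_comp j) (map Suc [0..<len])"
    using trunk_nth unfolding len_def by (intro nth_equalityI) (simp_all add: trunk_lab_def comp len_def)
  then show ?thesis
    unfolding rho_def Let_def alt_prod_eq_from alt_prod_from_def map_Suc_upt
    by (simp add: comp vtx_0 tau_at_def depth_def)
qed

lemma rho_trunk_decomposition:
  "rho chi X = alt_prod tau_whole trunk_lab len"
  "tau_whole 0 = aplus (rho chi X)"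
  "tau_whole len = astar (rho chi X)"
proof -
  have c: "\<And>j. idem (tau_comp j)"
    by (rule idem_tau_comp)
  have left: "i \<le> len \<Longrightarrow> tau_left i = astar (alt_prod tau_comp trunk_lab i)" for i
    using astar_alt_prod_recursion[OF c tau_left_0 tau_left_Suc] .
  have right: "i \<le> len \<Longrightarrow> tau_right i = aplus (alt_prod_from tau_comp trunk_lab len i)" for i
    using aplus_alt_prod_from_recursion[OF c tau_right_len tau_right_Suc] .
  have whole: "i \<le> len \<Longrightarrow> tau_whole i =
      astar (alt_prod tau_comp trunk_lab i) * aplus (alt_prod_from tau_comp trunk_lab len i)" for i
    by (simp add: tau_whole_eq left right)
  show "rho chi X = alt_prod tau_whole trunk_lab len"
    using alt_prod_astar_aplus[OF c whole, of len] alt_prod_idem_last[of tau_comp, OF c]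
    by (simp add: rho_eq_alt_prod alt_prod_from_last aplus_idem c)
  have "rho chi X = alt_prod_from tau_comp trunk_lab len 0"
    by (simp add: rho_eq_alt_prod alt_prod_eq_from)
  then show "tau_whole 0 = aplus (rho chi X)"
    using whole[of 0] idem_mult_aplus_alt_prod_from[where c = tau_comp and i = 0, OF c] c
    by (simp add: astar_idem)
  have "tau_whole len = astar (alt_prod tau_comp trunk_lab len) * tau_comp len"
    using whole[of len] c by (simp add: alt_prod_from_last aplus_idem)
  then show "tau_whole len = astar (rho chi X)"
    by (simp add: rho_eq_alt_prod astar_mult_idem[OF c, symmetric] alt_prod_idem_last[of tau_comp, OF c])
qed

end

section \<open>Retracts\<close>

lemma undir_adj_hom_rtrancl:
  assumes "edge_hom W Z fv fe" "(a, b) \<in> (undir_adj W)\<^sup>*"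
  shows "(fv a, fv b) \<in> (undir_adj Z)\<^sup>*"
  using assms(2)
proof (induction rule: rtrancl_induct)
  case (step b c)
  then obtain e where "e \<in> tedges W" "tsrc W e = b \<and> ttgt W e = c \<or> tsrc W e = c \<and> ttgt W e = b"
    using undir_adjE[OF step.hyps(2)] by blast
  then have "(fv b, fv c) \<in> undir_adj Z"
    using assms(1) undir_adjI[of "fe e" Z] unfolding edge_hom_def by auto
  then show ?case
    by (rule rtrancl_into_rtrancl[OF step.IH])
qed simp

lemma dpath_hom: "is_dpath X u es w \<Longrightarrow> edge_hom X Y fv fe \<Longrightarrow> is_dpath Y (fv u) (map fe es) (fv w)"
  by (induction es arbitrary: u) (auto simp: edge_hom_def)

lemma dpath_edge_subset:
  "is_dpath W u es w \<Longrightarrow> set es \<subseteq> tedges Z \<Longrightarrow> tsrc Z = tsrc W \<Longrightarrow> ttgt Z = ttgt W \<Longrightarrow> is_dpath Z u es w"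
  by (induction es arbitrary: u) auto

lemma forest_edge_subset:
  assumes "forest W" "tedges Z \<subseteq> tedges W" "tsrc Z = tsrc W" "ttgt Z = ttgt W"
  shows "forest Z"
  unfolding forest_def
proof (intro ballI notI)
  fix e
  assume e: "e \<in> tedges Z" and loop: "(tsrc Z e, ttgt Z e) \<in> (undir_adj (del_edge Z e))\<^sup>*"
  have "undir_adj (del_edge Z e) \<subseteq> undir_adj (del_edge W e)"
    using assms(2-4) unfolding undir_adj_def del_edge_def by auto
  then have "(tsrc Z e, ttgt Z e) \<in> (undir_adj (del_edge W e))\<^sup>*"
    using loop by (metis rtrancl_mono subsetD)
  then have "(tsrc W e, ttgt W e) \<in> (undir_adj (del_edge W e))\<^sup>*"
    using assms(3,4) by simp
  then show False
    using assms(1,2) e unfolding forest_def by auto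
qed

lemma retract_image_simps:
  "tverts (retract_image W fv fe) = fv ` tverts W" "tedges (retract_image W fv fe) = fe ` tedges W"
  "tsrc (retract_image W fv fe) = tsrc W" "ttgt (retract_image W fv fe) = ttgt W"
  "tlab (retract_image W fv fe) = tlab W"
  "tstart (retract_image W fv fe) = tstart W" "tend (retract_image W fv fe) = tend W"
  by (simp_all add: retract_image_def)

context
  fixes W :: "('v, 'e, 's) stree" and fv fe
  assumes weak_tree: "weak_tree W" and retraction: "is_retraction W fv fe"
begin

private lemma morphism: "is_morphism W W fv fe"
  using retraction unfolding is_retraction_def by simp

lemma edge_hom_retraction: "edge_hom W (retract_image W fv fe) fv fe"
  using morphism unfolding is_morphism_def edge_hom_def by (simp add: retract_image_simps)

lemma edge_hom_retract_inclusion: "edge_hom (retract_image W fv fe) W id id"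
  using morphism unfolding is_morphism_def edge_hom_def by (auto simp: retract_image_simps)

lemma retract_trunk:
  "is_dpath (retract_image W fv fe) (tstart W) (trunk W) (tend W)" "trunk (retract_image W fv fe) = trunk W"
proof -
  have forest: "forest W"
    using weak_tree unfolding weak_tree_def by simp
  obtain es where "is_dpath W (tstart W) es (tend W)"
    using weak_tree unfolding weak_tree_def by blast
  then have p: "is_dpath W (tstart W) (trunk W) (tend W)"
    using trunk_eqI[OF forest] by simp
  have "edge_hom W W fv fe" "fv (tstart W) = tstart W" "fv (tend W) = tend W"
    using morphism unfolding is_morphism_def edge_hom_def by simp_all
  then have "is_dpath W (tstart W) (map fe (trunk W)) (tend W)"
    using dpath_hom[OF p, of W fv fe] by simp
  then have "map fe (trunk W) = trunk W"
    by (rule dpath_unique[OF forest _ p])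
  then have "set (trunk W) = fe ` set (trunk W)"
    using set_map[of fe "trunk W"] by simp
  then have "set (trunk W) \<subseteq> fe ` tedges W"
    using uwalk_edges[OF dpath_uwalk[OF p]] by (metis image_mono)
  then have "set (trunk W) \<subseteq> tedges (retract_image W fv fe)"
    by (simp add: retract_image_simps)
  then show "is_dpath (retract_image W fv fe) (tstart W) (trunk W) (tend W)"
    by (rule dpath_edge_subset[OF p]) (simp_all add: retract_image_simps)
  moreover have "tedges (retract_image W fv fe) \<subseteq> tedges W"
    using morphism unfolding is_morphism_def by (auto simp: retract_image_simps)
  then have "forest (retract_image W fv fe)"
    by (rule forest_edge_subset[OF forest]) (simp_all add: retract_image_simps)
  ultimately show "trunk (retract_image W fv fe) = trunk W"
    using trunk_eqI[of "retract_image W fv fe"] by (simp add: retract_image_simps)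
qed

lemma weak_tree_retract: "weak_tree (retract_image W fv fe)"
proof -
  have W: "finite (tverts W)" "finite (tedges W)" "tstart W \<in> tverts W" "tend W \<in> tverts W"
    "\<forall>e\<in>tedges W. tsrc W e \<in> tverts W \<and> ttgt W e \<in> tverts W" "forest W"
    "\<forall>w\<in>tverts W. (tstart W, w) \<in> (undir_adj W)\<^sup>*"
    using weak_tree unfolding weak_tree_def by simp_all
  have fixes_ends: "fv (tstart W) = tstart W" "fv (tend W) = tend W"
    using morphism unfolding is_morphism_def by simp_all
  have "tedges (retract_image W fv fe) \<subseteq> tedges W"
    using morphism unfolding is_morphism_def by (auto simp: retract_image_simps)
  then have forest: "forest (retract_image W fv fe)"
    by (rule forest_edge_subset[OF W(6)]) (simp_all add: retract_image_simps)
  have conn: "\<forall>w\<in>tverts (retract_image W fv fe). (tstart (retract_image W fv fe), w) \<in> (undir_adj (retract_image W fv fe))\<^sup>*"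
    using W(7) undir_adj_hom_rtrancl[OF edge_hom_retraction] fixes_ends(1)
    by (auto simp: retract_image_simps) metis
  have ends: "\<forall>e\<in>tedges (retract_image W fv fe). tsrc (retract_image W fv fe) e \<in> tverts (retract_image W fv fe) \<and> ttgt (retract_image W fv fe) e \<in> tverts (retract_image W fv fe)"
    using edge_hom_retraction W(5) unfolding edge_hom_def by (auto simp: retract_image_simps)
  have start_end: "tstart (retract_image W fv fe) \<in> tverts (retract_image W fv fe)" "tend (retract_image W fv fe) \<in> tverts (retract_image W fv fe)"
    using W(3,4) fixes_ends by (auto simp: retract_image_simps intro: rev_image_eqI)
  have finite: "finite (tverts (retract_image W fv fe))" "finite (tedges (retract_image W fv fe))"
    using W(1,2) by (simp_all add: retract_image_simps)
  show ?thesis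
    unfolding weak_tree_def
    using finite ends start_end forest conn connected_card_verts_le[OF finite(2,1) start_end(1) conn]
      retract_trunk(1) by (auto simp: retract_image_simps)
qed

end

context adequate_monoid
begin

text \<open>Monotonicity along the retraction and along the inclusion of its image gives the two
  inequalities.\<close>
lemma tauF_retract_eq:
  assumes W: "weak_tree W" and r: "is_retraction W fv fe" and v: "v \<in> tverts (retract_image W fv fe)"
  defines "Z \<equiv> retract_image W fv fe"
  shows "tauF chi Z (Suc (card (tedges Z))) v {} = (tauF chi W (Suc (card (tedges W))) v {} :: 'm)"
proof -
  define K where "K = Suc (card (tedges W)) + Suc (card (tedges Z))"
  have Z: "weak_tree Z"
    unfolding Z_def using W r by (rule weak_tree_retract)
  have fin: "finite (tedges W)" "finite (tedges Z)"
    and loop_free: "loop_free W" "loop_free Z"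
    using W Z forest_loop_free unfolding weak_tree_def by auto
  have vW: "v \<in> tverts W" and fv: "fv v = v"
    using v r unfolding is_retraction_def is_morphism_def by (auto simp: retract_image_simps)
  have "tauF chi W K (id v) {} \<preceq> (tauF chi Z K v {} :: 'm)"
    using edge_hom_retract_inclusion[OF W r] fin loop_free
    by (intro tauF_hom_le[of Z W id id]) (simp_all add: Z_def)
  moreover have "tauF chi Z K (fv v) {} \<preceq> (tauF chi W K v {} :: 'm)"
    using edge_hom_retraction[OF W r] fin loop_free
    by (intro tauF_hom_le) (simp_all add: Z_def)
  moreover have "tauF chi W K v {} = tauF chi W (Suc (card (tedges W))) v {}"
    using tauF_stable[OF W vW, of K] unfolding K_def by simp
  moreover have "tauF chi Z K v {} = tauF chi Z (Suc (card (tedges Z))) v {}"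
    using tauF_stable[OF Z, of v K] v unfolding K_def Z_def by simp
  ultimately show ?thesis
    using fv idem_le_antisym by simp
qed

lemma rho_retract:
  assumes W: "weak_tree W" and r: "is_retraction W fv fe"
  shows "rho chi (retract_image W fv fe) = (rho chi W :: 'm)"
proof -
  define Z where "Z = retract_image W fv fe"
  interpret W: trunk_decomposition chi W
    using W by unfold_locales
  interpret Z: trunk_decomposition chi Z
    using weak_tree_retract[OF W r] unfolding Z_def by unfold_locales
  have trunk: "trunk Z = trunk W"
    using retract_trunk[OF W r] unfolding Z_def by simp
  then have len: "Z.len = W.len" and vtx: "Z.vtx = W.vtx" and lab: "Z.trunk_lab = W.trunk_lab"
    unfolding Z.len_def W.len_def Z.vtx_def[abs_def] W.vtx_def[abs_def]
      Z.trunk_lab_def[abs_def] W.trunk_lab_def[abs_def] by (simp_all add: Z_def retract_image_simps)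
  have whole: "Z.tau_whole i = W.tau_whole i" if "i \<le> W.len" for i
    using tauF_retract_eq[OF W r, of "W.vtx i" chi] Z.vtx_in_verts[of i] that len vtx
    unfolding Z.tau_whole_def W.tau_whole_def Z.tau_at_def W.tau_at_def Z.depth_def W.depth_def
    by (simp add: Z_def)
  have "rho chi Z = alt_prod Z.tau_whole Z.trunk_lab Z.len"
    by (rule Z.rho_trunk_decomposition(1))
  also have "\<dots> = alt_prod W.tau_whole W.trunk_lab W.len"
    unfolding len lab using whole by (rule alt_prod_cong)
  also have "\<dots> = rho chi W"
    by (rule W.rho_trunk_decomposition(1)[symmetric])
  finally show ?thesis
    unfolding Z_def .
qed

end

lemma tauF_tend_update [simp]: "tauF chi (X\<lparr>tend := a\<rparr>) n v P = tauF chi X n v P"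
  by (induction n arbitrary: v P) (simp_all add: tauF.simps(2))

lemma tauF_tstart_update [simp]: "tauF chi (X\<lparr>tstart := a\<rparr>) n v P = tauF chi X n v P"
  by (induction n arbitrary: v P) (simp_all add: tauF.simps(2))

lemma is_tree_tplus: "is_tree X \<Longrightarrow> is_tree (tplus X)"
  unfolding is_tree_def tplus_def by (auto simp: undir_adj_def intro: exI[of _ "[]"])

lemma is_tree_tstar: "is_tree X \<Longrightarrow> is_tree (tstar X)"
  unfolding is_tree_def tstar_def by (auto simp: undir_adj_def intro: exI[of _ "[]"])

context adequate_monoid
begin

lemma rho_trunk_Nil:
  assumes "weak_tree X" "trunk X = []"
  shows "rho chi X = (tauF chi X (Suc (card (tedges X))) (tstart X) {} :: 'm)"
proof -
  interpret trunk_decomposition chi X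
    using assms(1) by unfold_locales
  have "len = 0"
    using assms(2) by (simp add: len_def)
  then show ?thesis
    using rho_trunk_decomposition(1) by (simp add: tau_whole_def tau_at_def depth_def vtx_0)
qed

lemma rho_tplus:
  assumes "is_tree X"
  shows "rho chi (tplus X) = aplus (rho chi X :: 'm)"
proof -
  interpret trunk_decomposition chi X
    using tree_weak_tree[OF assms] by unfold_locales
  have "trunk (tplus X) = []"
    using tree_forest[OF is_tree_tplus[OF assms]] by (intro trunk_eqI) (simp_all add: tplus_def)
  then have "rho chi (tplus X) = tau_whole 0"
    using rho_trunk_Nil[OF tree_weak_tree[OF is_tree_tplus[OF assms]]]
    by (simp add: tplus_def tau_whole_def tau_at_def depth_def vtx_0)
  then show ?thesis
    using rho_trunk_decomposition(2) by simp
qed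

lemma rho_tstar:
  assumes "is_tree X"
  shows "rho chi (tstar X) = astar (rho chi X :: 'm)"
proof -
  interpret trunk_decomposition chi X
    using tree_weak_tree[OF assms] by unfold_locales
  have "trunk (tstar X) = []"
    using tree_forest[OF is_tree_tstar[OF assms]] by (intro trunk_eqI) (simp_all add: tstar_def)
  then have "rho chi (tstar X) = tau_whole len"
    using rho_trunk_Nil[OF tree_weak_tree[OF is_tree_tstar[OF assms]]]
    by (simp add: tstar_def tau_whole_def tau_at_def depth_def vtx_len)
  then show ?thesis
    using rho_trunk_decomposition(3) by simp
qed

lemma rho_no_edges:
  assumes "is_tree X" "tedges X = {}"
  shows "rho chi X = (1 :: 'm)"
proof -
  have "trunk X = []"
    using tree_forest[OF assms(1)] assms(1) uwalk_edges[OF dpath_uwalk] trunk_eqI assms(2)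
    unfolding is_tree_def by (metis subset_empty set_empty)
  then show ?thesis
    using rho_trunk_Nil[OF tree_weak_tree[OF assms(1)]] assms(2) by (simp add: tauF_Suc)
qed

end

section \<open>Products of trees\<close>

lemma tprod_simps:
  "tverts (tprod X Y) = Inl ` tverts X \<union> glue X Y ` tverts Y"
  "tedges (tprod X Y) = Inl ` tedges X \<union> Inr ` tedges Y"
  "tsrc (tprod X Y) (Inl e) = Inl (tsrc X e)" "tsrc (tprod X Y) (Inr f) = glue X Y (tsrc Y f)"
  "ttgt (tprod X Y) (Inl e) = Inl (ttgt X e)" "ttgt (tprod X Y) (Inr f) = glue X Y (ttgt Y f)"
  "tlab (tprod X Y) (Inl e) = tlab X e" "tlab (tprod X Y) (Inr f) = tlab Y f"
  "tstart (tprod X Y) = Inl (tstart X)" "tend (tprod X Y) = glue X Y (tend Y)"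
  unfolding tprod_def by simp_all

lemma glue_eq_Inl: "glue X Y w = Inl v \<longleftrightarrow> w = tstart Y \<and> v = tend X"
  unfolding glue_def by auto

lemma glue_start: "glue X Y (tstart Y) = Inl (tend X)"
  unfolding glue_def by simp

lemma glue_other: "w \<noteq> tstart Y \<Longrightarrow> glue X Y w = Inr w"
  unfolding glue_def by simp

lemma dpath_tprod_Inl: "is_dpath X u es w \<Longrightarrow> is_dpath (tprod X Y) (Inl u) (map Inl es) (Inl w)"
  by (induction es arbitrary: u) (auto simp: tprod_simps)

lemma dpath_tprod_Inr:
  "is_dpath Y u es w \<Longrightarrow> is_dpath (tprod X Y) (glue X Y u) (map Inr es) (glue X Y w)"
  by (induction es arbitrary: u) (auto simp: tprod_simps)

lemma dpath_tprod:
  "is_dpath X (tstart X) p (tend X) \<Longrightarrow> is_dpath Y (tstart Y) q (tend Y) \<Longrightarrow>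
   is_dpath (tprod X Y) (tstart (tprod X Y)) (map Inl p @ map Inr q) (tend (tprod X Y))"
proof -
  assume "is_dpath X (tstart X) p (tend X)" "is_dpath Y (tstart Y) q (tend Y)"
  then have "is_dpath (tprod X Y) (Inl (tstart X)) (map Inl p) (Inl (tend X))"
    "is_dpath (tprod X Y) (Inl (tend X)) (map Inr q) (glue X Y (tend Y))"
    using dpath_tprod_Inl dpath_tprod_Inr[of Y "tstart Y" q "tend Y" X] by (simp_all add: glue_start)
  then show ?thesis
    by (auto simp: dpath_append tprod_simps)
qed

lemma card_edges_tprod:
  "finite (tedges X) \<Longrightarrow> finite (tedges Y) \<Longrightarrow>
   card (tedges (tprod X Y)) = card (tedges X) + card (tedges Y)"
  unfolding tprod_simps by (subst card_Un_disjoint) (auto simp: card_image)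

lemma card_verts_tprod:
  assumes "finite (tverts X)" "finite (tverts Y)" "tend X \<in> tverts X" "tstart Y \<in> tverts Y"
  shows "card (tverts (tprod X Y)) + 1 = card (tverts X) + card (tverts Y)"
proof -
  have "glue X Y ` tverts Y = insert (Inl (tend X)) (Inr ` (tverts Y - {tstart Y}))"
    using assms(4) unfolding glue_def by auto
  then have "tverts (tprod X Y) = Inl ` tverts X \<union> Inr ` (tverts Y - {tstart Y})"
    using assms(3) by (auto simp: tprod_simps)
  moreover have "card (Inl ` tverts X \<union> Inr ` (tverts Y - {tstart Y})) =
      card (tverts X) + card (tverts Y - {tstart Y})"
    using assms by (subst card_Un_disjoint) (auto simp: card_image)
  moreover have "card (tverts Y) > 0"
    using assms(2,4) card_gt_0_iff by blast
  ultimately show ?thesis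
    using assms by (simp add: card_Diff_singleton)
qed

lemma connected_tprod:
  assumes X: "\<forall>u\<in>tverts X. \<forall>w\<in>tverts X. (u, w) \<in> (undir_adj X)\<^sup>*" "tend X \<in> tverts X"
    and Y: "\<forall>u\<in>tverts Y. \<forall>w\<in>tverts Y. (u, w) \<in> (undir_adj Y)\<^sup>*" "tstart Y \<in> tverts Y"
  shows "\<forall>u\<in>tverts (tprod X Y). \<forall>w\<in>tverts (tprod X Y). (u, w) \<in> (undir_adj (tprod X Y))\<^sup>*"
proof -
  have hom_X: "edge_hom X (tprod X Y) Inl Inl" and hom_Y: "edge_hom Y (tprod X Y) (glue X Y) Inr"
    by (simp_all add: edge_hom_def tprod_simps)
  have to_glue: "(x, Inl (tend X)) \<in> (undir_adj (tprod X Y))\<^sup>*" if x: "x \<in> tverts (tprod X Y)" for x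
  proof -
    consider a where "a \<in> tverts X" "x = Inl a" | a where "a \<in> tverts Y" "x = glue X Y a"
      using x unfolding tprod_simps by blast
    then show ?thesis
    proof cases
      case 1
      then show ?thesis
        using X undir_adj_hom_rtrancl[OF hom_X, of a "tend X"] by simp
    next
      case 2
      then show ?thesis
        using Y undir_adj_hom_rtrancl[OF hom_Y, of a "tstart Y"] glue_start[of X Y] by simp
    qed
  qed
  show ?thesis
  proof (intro ballI)
    fix u w
    assume "u \<in> tverts (tprod X Y)" "w \<in> tverts (tprod X Y)"
    then show "(u, w) \<in> (undir_adj (tprod X Y))\<^sup>*"
      using rtrancl_trans[OF to_glue undir_adj_sym[OF to_glue]] by blast
  qed
qed

lemma is_tree_tprod:
  assumes X: "is_tree X" and Y: "is_tree Y"
  shows "is_tree (tprod X Y)"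
proof -
  obtain p q where "is_dpath X (tstart X) p (tend X)" "is_dpath Y (tstart Y) q (tend Y)"
    using X Y unfolding is_tree_def by blast
  then have "is_dpath (tprod X Y) (tstart (tprod X Y)) (map Inl p @ map Inr q) (tend (tprod X Y))"
    by (rule dpath_tprod)
  then show ?thesis
    using X Y card_edges_tprod[of X Y] card_verts_tprod[of X Y] connected_tprod[of X Y]
    unfolding is_tree_def by (auto simp: tprod_simps)
qed

lemma walks_avoid_child:
  assumes "forest X" "e \<in> tedges X" "tsrc X e = v \<or> ttgt X e = v"
  shows "walks_avoid X {v} (other_end X e v) {e}"
  unfolding walks_avoid_def
proof (intro allI impI)
  fix es w
  assume "uwalk X (other_end X e v) es w" "reduced {e} es"
  then have "w = v \<Longrightarrow> e # es = []"
    using assms by (intro reduced_closed_walk_Nil[OF assms(1), of v _ "{}"]) auto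
  then show "w \<notin> {v}"
    by auto
qed

context trunk_decomposition
begin

lemma walks_avoid_end: "i < len \<Longrightarrow> walks_avoid X {tend X} (vtx i) (set (trunk X))"
  unfolding walks_avoid_def
proof (intro allI impI notI)
  fix p w
  assume i: "i < len" and p: "uwalk X (vtx i) p w" "reduced (set (trunk X)) p" "w \<in> {tend X}"
  have q: "is_dpath X (vtx i) (drop i (trunk X)) (tend X)"
    using dpath_drop[OF trunk_dpath, of i] i unfolding vtx_def len_def by simp
  have "p = drop i (trunk X)"
    using reduced_walk_unique[OF forest p(1) _ reduced_empty[OF p(2)] dpath_reduced[OF forest_loop_free[OF forest] q]]
      dpath_uwalk[OF q] p(3) by simp
  moreover have "drop i (trunk X) \<noteq> []" "hd (drop i (trunk X)) \<in> set (trunk X)"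
    using i unfolding len_def by (simp_all add: hd_drop_conv_nth)
  ultimately show False
    using p(2) unfolding reduced_def by auto
qed

lemma walks_avoid_start: "0 < j \<Longrightarrow> j \<le> len \<Longrightarrow> walks_avoid X {tstart X} (vtx j) (set (trunk X))"
  unfolding walks_avoid_def
proof (intro allI impI notI)
  fix p w
  assume j: "0 < j" "j \<le> len" and p: "uwalk X (vtx j) p w" "reduced (set (trunk X)) p" "w \<in> {tstart X}"
  have q: "is_dpath X (tstart X) (take j (trunk X)) (vtx j)"
    using dpath_take[OF trunk_dpath, of j] j unfolding vtx_def len_def by simp
  have "uwalk X (tstart X) (rev p) (vtx j)" "reduced {} (rev p)"
    using uwalk_rev[OF p(1)] p(3) reduced_empty_rev[THEN iffD2, OF reduced_empty[OF p(2)]] by simp_all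
  then have "rev p = take j (trunk X)"
    using reduced_walk_unique[OF forest _ dpath_uwalk[OF q] _ dpath_reduced[OF forest_loop_free[OF forest] q]]
    by blast
  then have "set p \<subseteq> set (trunk X)"
    by (metis set_rev set_take_subset)
  moreover have "p \<noteq> []"
    using p(1,3) vtx_inj[of j 0] j vtx_0 by auto
  ultimately show False
    using p(2) unfolding reduced_def by (cases p) auto
qed

end

context adequate_monoid
begin

lemma tauF_tprod_left:
  assumes X: "weak_tree X" and "finite (tedges Y)" "u \<in> tverts X" "walks_avoid X {tend X} u P"
    "\<forall>e\<in>tedges X. Inl e \<in> Q \<longleftrightarrow> e \<in> P"
  shows "tauF chi (tprod X Y) k (Inl u) Q = (tauF chi X k u P :: 'm)"
proof (rule tauF_local_embedding)
  show "local_embedding X (tprod X Y) Inl Inl {tend X}"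
    unfolding local_embedding_def edge_hom_def by (auto simp: tprod_simps glue_eq_Inl)
qed (use assms in \<open>simp_all add: weak_tree_def\<close>)

lemma tauF_tprod_right:
  assumes Y: "weak_tree Y" and "finite (tedges X)" "u \<in> tverts Y" "walks_avoid Y {tstart Y} u P"
    "\<forall>e\<in>tedges Y. Inr e \<in> Q \<longleftrightarrow> e \<in> P"
  shows "tauF chi (tprod X Y) k (glue X Y u) Q = (tauF chi Y k u P :: 'm)"
proof (rule tauF_local_embedding)
  show "local_embedding Y (tprod X Y) (glue X Y) Inr {tstart Y}"
    unfolding local_embedding_def edge_hom_def by (auto simp: tprod_simps glue_def split: if_splits)
qed (use assms in \<open>simp_all add: weak_tree_def\<close>)

lemma out_factor_tprod_Inl:
  assumes X: "weak_tree X" and "finite (tedges Y)" "e \<in> tedges X" "tsrc X e = tend X"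
  shows "out_factor chi (tprod X Y) m (Inl e) = (out_factor chi X m e :: 'm)"
proof -
  have "walks_avoid X {tend X} (ttgt X e) {e}"
    using walks_avoid_child[of X e "tend X"] X assms(3,4) by (simp add: weak_tree_def other_end_def)
  then show ?thesis
    using tauF_tprod_left[OF X, of Y "ttgt X e" "{e}" "{Inl e}" chi m] assms X
    by (simp add: out_factor_def tprod_simps weak_tree_def)
qed

lemma in_factor_tprod_Inl:
  assumes X: "weak_tree X" and "finite (tedges Y)" "e \<in> tedges X" "ttgt X e = tend X"
  shows "in_factor chi (tprod X Y) m (Inl e) = (in_factor chi X m e :: 'm)"
proof -
  have "walks_avoid X {tend X} (tsrc X e) {e}"
    using walks_avoid_child[of X e "tend X"] X assms(3,4) by (auto simp: weak_tree_def other_end_def split: if_splits)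
  then show ?thesis
    using tauF_tprod_left[OF X, of Y "tsrc X e" "{e}" "{Inl e}" chi m] assms X
    by (simp add: in_factor_def tprod_simps weak_tree_def)
qed

lemma out_factor_tprod_Inr:
  assumes Y: "weak_tree Y" and "finite (tedges X)" "e \<in> tedges Y" "tsrc Y e = tstart Y"
  shows "out_factor chi (tprod X Y) m (Inr e) = (out_factor chi Y m e :: 'm)"
proof -
  have "walks_avoid Y {tstart Y} (ttgt Y e) {e}"
    using walks_avoid_child[of Y e "tstart Y"] Y assms(3,4) by (simp add: weak_tree_def other_end_def)
  then show ?thesis
    using tauF_tprod_right[OF Y, of X "ttgt Y e" "{e}" "{Inr e}" chi m] assms Y
    by (simp add: out_factor_def tprod_simps weak_tree_def)
qed

lemma in_factor_tprod_Inr: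
  assumes Y: "weak_tree Y" and "finite (tedges X)" "e \<in> tedges Y" "ttgt Y e = tstart Y"
  shows "in_factor chi (tprod X Y) m (Inr e) = (in_factor chi Y m e :: 'm)"
proof -
  have "walks_avoid Y {tstart Y} (tsrc Y e) {e}"
    using walks_avoid_child[of Y e "tstart Y"] Y assms(3,4) by (auto simp: weak_tree_def other_end_def split: if_splits)
  then show ?thesis
    using tauF_tprod_right[OF Y, of X "tsrc Y e" "{e}" "{Inr e}" chi m] assms Y
    by (simp add: in_factor_def tprod_simps weak_tree_def)
qed

lemma tauF_tprod_glue:
  assumes X: "weak_tree X" and Y: "weak_tree Y"
    and PX: "\<forall>e\<in>tedges X. Inl e \<in> Q \<longleftrightarrow> e \<in> PX" and PY: "\<forall>e\<in>tedges Y. Inr e \<in> Q \<longleftrightarrow> e \<in> PY"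
  shows "tauF chi (tprod X Y) (Suc m) (Inl (tend X)) Q =
    tauF chi X (Suc m) (tend X) PX * (tauF chi Y (Suc m) (tstart Y) PY :: 'm)"
proof -
  define W where "W = tprod X Y"
  have fin: "finite (tedges X)" "finite (tedges Y)"
    using X Y unfolding weak_tree_def by simp_all
  have out_eq: "out_edges W (Inl (tend X)) Q = Inl ` out_edges X (tend X) PX \<union> Inr ` out_edges Y (tstart Y) PY"
    and in_eq: "in_edges W (Inl (tend X)) Q = Inl ` in_edges X (tend X) PX \<union> Inr ` in_edges Y (tstart Y) PY"
    using PX PY unfolding W_def by (auto simp: tprod_simps glue_eq_Inl)
  have out_prod: "prodE (out_edges W (Inl (tend X)) Q) (out_factor chi W m) =
      prodE (out_edges X (tend X) PX) (out_factor chi X m) * prodE (out_edges Y (tstart Y) PY) (out_factor chi Y m)"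
    unfolding out_eq unfolding W_def using fin
    by (intro prodE_Inl_Inr) (simp_all add: out_factor_tprod_Inl[OF X] out_factor_tprod_Inr[OF Y])
  have in_prod: "prodE (in_edges W (Inl (tend X)) Q) (in_factor chi W m) =
      prodE (in_edges X (tend X) PX) (in_factor chi X m) * prodE (in_edges Y (tstart Y) PY) (in_factor chi Y m)"
    unfolding in_eq unfolding W_def using fin
    by (intro prodE_Inl_Inr) (simp_all add: in_factor_tprod_Inl[OF X] in_factor_tprod_Inr[OF Y])
  have "tauF chi W (Suc m) (Inl (tend X)) Q =
      (prodE (out_edges X (tend X) PX) (out_factor chi X m) * prodE (out_edges Y (tstart Y) PY) (out_factor chi Y m)) *
      (prodE (in_edges X (tend X) PX) (in_factor chi X m) * prodE (in_edges Y (tstart Y) PY) (in_factor chi Y m))"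
    unfolding tauF_Suc out_prod in_prod ..
  also have "\<dots> = (prodE (out_edges X (tend X) PX) (out_factor chi X m) * prodE (in_edges X (tend X) PX) (in_factor chi X m)) *
      (prodE (out_edges Y (tstart Y) PY) (out_factor chi Y m) * prodE (in_edges Y (tstart Y) PY) (in_factor chi Y m))"
    by (simp add: mult.assoc idem_mult_left_commute idem_prodE)
  finally show ?thesis
    unfolding W_def tauF_Suc .
qed

end

locale tree_product = adequate_monoid +
  fixes chi :: "'s \<Rightarrow> 'm::monoid_mult" and X :: "('v, 'e, 's) stree" and Y :: "('w, 'f, 's) stree"
  assumes tree_X: "is_tree X" and tree_Y: "is_tree Y"
begin

sublocale X: trunk_decomposition chi X
  using tree_weak_tree[OF tree_X] by unfold_locales

sublocale Y: trunk_decomposition chi Y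
  using tree_weak_tree[OF tree_Y] by unfold_locales

sublocale XY: trunk_decomposition chi "tprod X Y"
  using tree_weak_tree[OF is_tree_tprod[OF tree_X tree_Y]] by unfold_locales

lemma trunk_tprod: "trunk (tprod X Y) = map Inl (trunk X) @ map Inr (trunk Y)"
  using dpath_tprod[OF X.trunk_dpath Y.trunk_dpath] by (rule trunk_eqI[OF XY.forest])

lemma len_tprod: "XY.len = X.len + Y.len"
  unfolding XY.len_def X.len_def Y.len_def trunk_tprod by simp

lemma vtx_tprod_left: "i \<le> X.len \<Longrightarrow> XY.vtx i = Inl (X.vtx i)"
  unfolding XY.vtx_def X.vtx_def X.len_def trunk_tprod
  by (cases i) (auto simp: tprod_simps nth_append)

lemma vtx_tprod_right:
  assumes "0 < j" "j \<le> Y.len"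
  shows "XY.vtx (X.len + j) = Inr (Y.vtx j)"
proof -
  obtain k where k: "j = Suc k" "k < Y.len"
    using assms by (cases j) auto
  have "XY.vtx (X.len + j) = glue X Y (ttgt Y (trunk Y ! k))"
    unfolding XY.vtx_def X.len_def trunk_tprod k(1) using k(2)
    by (simp add: nth_append tprod_simps Y.len_def)
  also have "\<dots> = Inr (Y.vtx j)"
  proof -
    have "Y.vtx j \<noteq> tstart Y"
      using Y.vtx_inj[of j 0] Y.vtx_0 assms by auto
    then show ?thesis
      using Y.trunk_nth[OF k(2)] k(1) by (simp add: glue_other)
  qed
  finally show ?thesis .
qed

lemma trunk_lab_tprod_left: "0 < i \<Longrightarrow> i \<le> X.len \<Longrightarrow> XY.trunk_lab i = X.trunk_lab i"
  unfolding XY.trunk_lab_def X.trunk_lab_def X.len_def trunk_tprod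
  by (auto simp: nth_append tprod_simps)

lemma trunk_lab_tprod_right: "0 < j \<Longrightarrow> j \<le> Y.len \<Longrightarrow> XY.trunk_lab (X.len + j) = Y.trunk_lab j"
  unfolding XY.trunk_lab_def Y.trunk_lab_def X.len_def Y.len_def trunk_tprod
  by (auto simp: nth_append tprod_simps)

lemma depth_tprod: "X.depth \<le> XY.depth" "Y.depth \<le> XY.depth"
  unfolding XY.depth_def X.depth_def Y.depth_def
  using card_edges_tprod[OF X.finite_edges Y.finite_edges] by simp_all

lemma trunk_tprod_Inl: "\<forall>e\<in>tedges X. Inl e \<in> set (trunk (tprod X Y)) \<longleftrightarrow> e \<in> set (trunk X)"
  and trunk_tprod_Inr: "\<forall>e\<in>tedges Y. Inr e \<in> set (trunk (tprod X Y)) \<longleftrightarrow> e \<in> set (trunk Y)"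
  unfolding trunk_tprod by auto

lemma tau_comp_tprod_left:
  assumes i: "i < X.len"
  shows "XY.tau_comp i = X.tau_comp i"
proof -
  have "XY.tau_comp i = tauF chi (tprod X Y) XY.depth (Inl (X.vtx i)) (set (trunk (tprod X Y)))"
    using XY.tau_comp_eq_tauF[of i XY.depth] vtx_tprod_left[of i] i len_tprod by simp
  also have "\<dots> = tauF chi X XY.depth (X.vtx i) (set (trunk X))"
    using X.vtx_in_verts[of i] i X.walks_avoid_end[OF i] trunk_tprod_Inl
    by (intro tauF_tprod_left[OF X.weak_tree Y.finite_edges]) simp_all
  also have "\<dots> = X.tau_comp i"
    using X.tau_comp_eq_tauF[of i XY.depth] depth_tprod i by simp
  finally show ?thesis .
qed

lemma tau_comp_tprod_right:
  assumes j: "0 < j" "j \<le> Y.len"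
  shows "XY.tau_comp (X.len + j) = Y.tau_comp j"
proof -
  have "Y.vtx j \<noteq> tstart Y"
    using Y.vtx_inj[of j 0] Y.vtx_0 j by auto
  then have "XY.tau_comp (X.len + j) =
      tauF chi (tprod X Y) XY.depth (glue X Y (Y.vtx j)) (set (trunk (tprod X Y)))"
    using XY.tau_comp_eq_tauF[of "X.len + j" XY.depth] vtx_tprod_right[OF j] j len_tprod
    by (simp add: glue_other)
  also have "\<dots> = tauF chi Y XY.depth (Y.vtx j) (set (trunk Y))"
    using Y.vtx_in_verts[of j] j Y.walks_avoid_start[OF j] trunk_tprod_Inr
    by (intro tauF_tprod_right[OF Y.weak_tree X.finite_edges]) simp_all
  also have "\<dots> = Y.tau_comp j"
    using Y.tau_comp_eq_tauF[of j XY.depth] depth_tprod j by simp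
  finally show ?thesis .
qed

lemma tau_comp_tprod_glue: "XY.tau_comp X.len = X.tau_comp X.len * Y.tau_comp 0"
proof -
  have "XY.tau_comp X.len = tauF chi (tprod X Y) (Suc XY.depth) (Inl (tend X)) (set (trunk (tprod X Y)))"
    using XY.tau_comp_eq_tauF[of X.len "Suc XY.depth"] vtx_tprod_left[of X.len] X.vtx_len len_tprod by simp
  also have "\<dots> = tauF chi X (Suc XY.depth) (tend X) (set (trunk X)) *
      tauF chi Y (Suc XY.depth) (tstart Y) (set (trunk Y))"
    using trunk_tprod_Inl trunk_tprod_Inr by (rule tauF_tprod_glue[OF X.weak_tree Y.weak_tree])
  also have "\<dots> = X.tau_comp X.len * Y.tau_comp 0"
    using X.tau_comp_eq_tauF[of X.len "Suc XY.depth"] Y.tau_comp_eq_tauF[of 0 "Suc XY.depth"]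
      depth_tprod X.vtx_len Y.vtx_0 by simp
  finally show ?thesis .
qed

lemma rho_tprod: "rho chi (tprod X Y) = rho chi X * rho chi Y"
proof -
  have "rho chi (tprod X Y) = alt_prod XY.tau_comp XY.trunk_lab (X.len + Y.len)"
    using XY.rho_eq_alt_prod len_tprod by simp
  also have "\<dots> = alt_prod X.tau_comp X.trunk_lab X.len * alt_prod Y.tau_comp Y.trunk_lab Y.len"
    by (rule alt_prod_append) (simp_all add: tau_comp_tprod_left tau_comp_tprod_glue
        tau_comp_tprod_right trunk_lab_tprod_left trunk_lab_tprod_right)
  finally show ?thesis
    by (simp add: X.rho_eq_alt_prod Y.rho_eq_alt_prod)
qed

end

context adequate_monoid
begin

lemma rho_tprod_trees:
  assumes "is_tree X" "is_tree Y"
  shows "rho chi (tprod X Y) = rho chi X * (rho chi Y :: 'm)"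
proof -
  interpret P: tree_product chi X Y
    using assms by unfold_locales
  show ?thesis
    by (rule P.rho_tprod)
qed

lemma rho_pruned_retract:
  assumes "is_tree W" "is_pruned_retract Z W"
  shows "rho chi Z = (rho chi W :: 'm)"
  using assms rho_retract[OF tree_weak_tree] unfolding is_pruned_retract_def by blast

end

theorem corollary5p14:
  fixes chi :: "'s \<Rightarrow> 'm::monoid_mult"
  assumes "adequate TYPE('m)"
  shows
    "(\<forall>(X :: ('v, 'e, 's) stree) (Y :: ('w, 'f, 's) stree) Z.
        is_tree X \<and> is_pruned X \<and> is_tree Y \<and> is_pruned Y \<and>
        is_pruned_retract Z (tprod X Y) \<longrightarrow> rho chi Z = rho chi X * rho chi Y)
   \<and> (\<forall>(X :: ('v, 'e, 's) stree) Z.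
        is_tree X \<and> is_pruned X \<and> is_pruned_retract Z (tplus X) \<longrightarrow>
          rho chi Z = aplus (rho chi X))
   \<and> (\<forall>(X :: ('v, 'e, 's) stree) Z.
        is_tree X \<and> is_pruned X \<and> is_pruned_retract Z (tstar X) \<longrightarrow>
          rho chi Z = astar (rho chi X))
   \<and> (\<forall>X :: ('v, 'e, 's) stree. is_tree X \<and> tedges X = {} \<longrightarrow> rho chi X = 1)"
proof -
  interpret adequate_monoid
    using assms by unfold_locales
  show ?thesis
  proof (intro conjI allI impI; elim conjE)
    fix X :: "('v, 'e, 's) stree" and Y :: "('w, 'f, 's) stree" and Z
    assume "is_tree X" "is_tree Y" "is_pruned_retract Z (tprod X Y)"
    then show "rho chi Z = rho chi X * rho chi Y"
      using rho_pruned_retract[OF is_tree_tprod] rho_tprod_trees by metis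
  next
    fix X :: "('v, 'e, 's) stree" and Z
    assume "is_tree X" "is_pruned_retract Z (tplus X)"
    then show "rho chi Z = aplus (rho chi X)"
      using rho_pruned_retract[OF is_tree_tplus] rho_tplus by metis
  next
    fix X :: "('v, 'e, 's) stree" and Z
    assume "is_tree X" "is_pruned_retract Z (tstar X)"
    then show "rho chi Z = astar (rho chi X)"
      using rho_pruned_retract[OF is_tree_tstar] rho_tstar by metis
  next
    fix X :: "('v, 'e, 's) stree"
    assume "is_tree X" "tedges X = {}"
    then show "rho chi X = 1"
      by (rule rho_no_edges)
  qed
qed

end
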